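(* Let $0<3x_0<L$, $\gamma=\gamma(x_0,L)$, $\lambda=\lambda(x_0,L)=\frac{2L}{L+x_0}$, and let $\mathcal V$ be a one-sided admissible variation of $\gamma$. Let $\varphi,\varphi_\tau,\psi,\psi_\tau\in C^\infty[0,2L]$ be defined by $X=\varphi N+\varphi_\tau\dot\gamma$ and $X'=\psi N+\psi_\tau\dot\gamma$. Then $$\left.\frac{d^2\mathcal F(\mathcal V(\cdot,t))}{dt^2}\right|_{t=0^+}=\int_0^{2L}\Big(2H\varphi^2-\frac{2\dot\varphi^2}{H}+\frac{2\ddot\varphi^2}{H^3}\Big)ds+\lambda\int_0^{2L}\big(\psi+H\varphi_\tau^2+2\varphi\dot\varphi_\tau\big)ds+\Big[\frac{\dot\psi-2\dot\varphi\dot\varphi_\tau}{H^2}\Big]_0^{2L}.$$ If moreover $\mathcal V$ is an (two-sided) admissible variation, then $\dot\varphi(0)=\dot\varphi(2L)=0$, $\dot\psi(0)\le0$, $\dot\psi(2L)\ge0$, and hence $$\left.\frac{d^2\mathcal F(\mathcal V(\cdot,t))}{dt^2}\right|_{t=0}=\int_0^{2L}\Big(2H\varphi^2-\frac{2\dot\varphi^2}{H}+\frac{2\ddot\varphi^2}{H^3}\Big)ds+\lambda\int_0^{2L}\big(\psi+H\varphi_\tau^2+2\varphi\dot\varphi_\tau\big)ds+\Big[\frac{\dot\psi}{H^2}\Big]_0^{2L}$$ $$\ge\int_0^{2L}\Big(2H\varphi^2-\frac{2\dot\varphi^2}{H}+\frac{2\ddot\varphi^2}{H^3}\Big)ds+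\lambda\int_0^{2L}\big(\psi+H\varphi_\tau^2+2\varphi\dot\varphi_\tau\big)ds.$$
   Context: Notation: $(\xi,\eta)^\perp=(\eta,-\xi)$; for a regular curve $\gamma\in C^2([0,2L],\mathbb R^2)$, curvature $H=\langle\dot\gamma,\ddot\gamma^\perp\rangle/|\dot\gamma|^3$, normal $N=\dot\gamma^\perp/|\dot\gamma|$; strictly counterclockwise means $H>0$. A curve $\gamma=(x,y)$ is admissible if $\gamma\in C^\infty([0,2L],\mathbb R^2)$ is regular, strictly counterclockwise, injective, $\gamma(0)=(x_0,0)$, $\gamma(2L)=(-x_0,0)$, $y>0$ on $(0,2L)$. $\mathcal F(\gamma)=\int_0^{2L}|\dot\gamma|H^{-1}ds$. An admissible (resp. one-sided admissible) variation is a smooth $\mathcal V:[0,2L]\times[-t_{\mathcal V},t_{\mathcal V}]\to\mathbb R^2$ (resp. $[0,2L]\times[0,t_{\mathcal V}]$) with $\mathcal V(\cdot,0)=\gamma$ and every $\mathcal V(\cdot,t)$ admissible; velocity $X=\partial_t\mathcal V|_{t=0}$, acceleration $X'=\partial_t^2\mathcal V|_{t=0}$ (one-sided derivatives in the one-sided case). For $0<3x_0<L$: with $\sigma=\pi\sqrt{x_0/(L+x_0)}$, $k=L/\sin\sigma$, $a(s)=\arcsin((s-L)/k)$, $\gamma(x_0,L)=(x,y)$ on $[0,2L]$ with $x(s)=-\frac k2\big(\frac{\sigma}{\pi+\sigma}\sin(\tfrac{\pi+\sigma}{\sigma}a(s))+\frac{\sigma}{\pi-\sigma}\sin(\tfrac{\pi-\sigma}{\sigma}a(s))\big)$,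 $y(s)=\frac k2\big(\frac{\sigma}{\pi+\sigma}\cos(\tfrac{\pi+\sigma}{\sigma}a(s))+\frac{\sigma}{\pi-\sigma}\cos(\tfrac{\pi-\sigma}{\sigma}a(s))\big)+\frac{\pi x_0}{\sigma\tan\sigma}$. It is admissible, parametrized by arc length, with curvature $H(s)=\frac{\pi}{\sigma\sqrt{k^2-(s-L)^2}}$ satisfying $2+\frac{d^2(H^{-2})}{ds^2}=\lambda(x_0,L)$. *)

theory Defs
  imports "HOL-Analysis.Analysis"
begin

coinductive smooth_open :: "'a::euclidean_space set \<Rightarrow> ('a \<Rightarrow> 'b::real_normed_vector) \<Rightarrow> bool"
  for U where
  "f differentiable_on U \<Longrightarrow> (\<forall>i\<in>Basis. smooth_open U (\<lambda>x. frechet_derivative f (at x) i))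
     \<Longrightarrow> smooth_open U f"

definition Cinf_on :: "'a::euclidean_space set \<Rightarrow> ('a \<Rightarrow> 'b::real_normed_vector) \<Rightarrow> bool" where
  "Cinf_on S f \<longleftrightarrow> (\<exists>U g. open U \<and> S \<subseteq> U \<and> smooth_open U g \<and> (\<forall>x\<in>S. g x = f x))"

definition perp :: "real \<times> real \<Rightarrow> real \<times> real" where
  "perp v = (snd v, - fst v)"

text \<open>derivative within a set (one-sided at endpoints of an interval)\<close>
definition dv :: "real set \<Rightarrow> (real \<Rightarrow> 'b::real_normed_vector) \<Rightarrow> real \<Rightarrow> 'b" where
  "dv I f s = vector_derivative f (at s within I)"

definition curv :: "real \<Rightarrow> (real \<Rightarrow> real \<times> real) \<Rightarrow> real \<Rightarrow> real" where
  "curv L \<gamma> s = inner (dv {0..2*L} \<gamma> s) (perp (dv {0..2*L} (dv {0..2*L} \<gamma>) s))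
                    / norm (dv {0..2*L} \<gamma> s) ^ 3"

definition normal :: "real \<Rightarrow> (real \<Rightarrow> real \<times> real) \<Rightarrow> real \<Rightarrow> real \<times> real" where
  "normal L \<gamma> s = (1 / norm (dv {0..2*L} \<gamma> s)) *\<^sub>R perp (dv {0..2*L} \<gamma> s)"

definition admissible :: "real \<Rightarrow> real \<Rightarrow> (real \<Rightarrow> real \<times> real) \<Rightarrow> bool" where
  "admissible x0 L \<gamma> \<longleftrightarrow>
     Cinf_on {0..2*L} \<gamma> \<and>
     (\<forall>s\<in>{0..2*L}. dv {0..2*L} \<gamma> s \<noteq> 0) \<and>
     (\<forall>s\<in>{0..2*L}. curv L \<gamma> s > 0) \<and>
     inj_on \<gamma> {0..2*L} \<and>
     \<gamma> 0 = (x0, 0) \<and> \<gamma> (2*L) = (-x0, 0) \<and>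
     (\<forall>s\<in>{0<..<2*L}. snd (\<gamma> s) > 0)"

definition Fen :: "real \<Rightarrow> (real \<Rightarrow> real \<times> real) \<Rightarrow> real" where
  "Fen L \<gamma> = integral {0..2*L} (\<lambda>s. norm (dv {0..2*L} \<gamma> s) / curv L \<gamma> s)"

definition variation :: "real \<Rightarrow> real \<Rightarrow> (real \<Rightarrow> real \<times> real) \<Rightarrow> real set
     \<Rightarrow> (real \<Rightarrow> real \<Rightarrow> real \<times> real) \<Rightarrow> bool" where
  "variation x0 L \<gamma> T V \<longleftrightarrow>
     Cinf_on ({0..2*L} \<times> T) (\<lambda>p. V (fst p) (snd p)) \<and>
     (\<forall>s\<in>{0..2*L}. V s 0 = \<gamma> s) \<and>
     (\<forall>t\<in>T. admissible x0 L (\<lambda>s. V s t))"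

definition admissible_variation where
  "admissible_variation x0 L \<gamma> tV V \<longleftrightarrow> tV > 0 \<and> variation x0 L \<gamma> {-tV..tV} V"

definition one_sided_admissible_variation where
  "one_sided_admissible_variation x0 L \<gamma> tV V \<longleftrightarrow> tV > 0 \<and> variation x0 L \<gamma> {0..tV} V"

definition velocity :: "real set \<Rightarrow> (real \<Rightarrow> real \<Rightarrow> real \<times> real) \<Rightarrow> real \<Rightarrow> real \<times> real" where
  "velocity T V s = dv T (\<lambda>t. V s t) 0"

definition accel :: "real set \<Rightarrow> (real \<Rightarrow> real \<Rightarrow> real \<times> real) \<Rightarrow> real \<Rightarrow> real \<times> real" where
  "accel T V s = dv T (dv T (\<lambda>t. V s t)) 0"

definition sig :: "real \<Rightarrow> real \<Rightarrow> real" where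
  "sig x0 L = pi * sqrt (x0 / (L + x0))"

definition kk :: "real \<Rightarrow> real \<Rightarrow> real" where
  "kk x0 L = L / sin (sig x0 L)"

definition aa :: "real \<Rightarrow> real \<Rightarrow> real \<Rightarrow> real" where
  "aa x0 L s = arcsin ((s - L) / kk x0 L)"

definition gamma_ex :: "real \<Rightarrow> real \<Rightarrow> real \<Rightarrow> real \<times> real" where
  "gamma_ex x0 L s =
    (let \<sigma> = sig x0 L; k = kk x0 L; a = aa x0 L s in
     ( - k / 2 * (\<sigma> / (pi + \<sigma>) * sin ((pi + \<sigma>) / \<sigma> * a)
                 + \<sigma> / (pi - \<sigma>) * sin ((pi - \<sigma>) / \<sigma> * a)),
       k / 2 * (\<sigma> / (pi + \<sigma>) * cos ((pi + \<sigma>) / \<sigma> * a)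
                 + \<sigma> / (pi - \<sigma>) * cos ((pi - \<sigma>) / \<sigma> * a))
       + pi * x0 / (\<sigma> * tan \<sigma>)))"

definition lambda_ex :: "real \<Rightarrow> real \<Rightarrow> real" where
  "lambda_ex x0 L = 2 * L / (L + x0)"

definition Qform :: "real \<Rightarrow> real \<Rightarrow> (real \<Rightarrow> real) \<Rightarrow> (real \<Rightarrow> real) \<Rightarrow> (real \<Rightarrow> real) \<Rightarrow> real" where
  "Qform x0 L \<phi> \<phi>\<tau> \<psi> =
     (let H = curv L (gamma_ex x0 L); I = {0..2*L} in
       integral I (\<lambda>s. 2 * H s * (\<phi> s)\<^sup>2 - 2 * (dv I \<phi> s)\<^sup>2 / H s
                         + 2 * (dv I (dv I \<phi>) s)\<^sup>2 / H s ^ 3)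
     + lambda_ex x0 L * integral I (\<lambda>s. \<psi> s + H s * (\<phi>\<tau> s)\<^sup>2 + 2 * \<phi> s * dv I \<phi>\<tau> s))"

end

theory Submission
  imports Defs
begin

text \<open>The energy density \<open>|\<gamma>'| / H\<close> equals \<open>|\<gamma>'|\<^sup>4 / (\<gamma>' \<times> \<gamma>'')\<close>. After extending the
  variation smoothly to an open set, \<open>\<F>(\<V>(\<cdot>, t))\<close> can be differentiated twice under the
  integral sign. At \<open>t = 0\<close> the curve is \<open>\<gamma>\<close>, parametrized by arc length, whose Frenet frame
  \<open>(T, N)\<close> turns at rate \<open>H\<close>; commuting the mixed partials, the second \<open>t\<close>-derivative of the
  density becomes a polynomial in the frame coordinates of \<open>X\<close>, \<open>X'\<close> and their \<open>s\<close>-derivatives.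
  Using only \<open>2 + (H\<^sup>-\<^sup>2)'' = \<lambda>\<close>, this polynomial is the quadratic density
  \<open>2H\<phi>\<^sup>2 - 2\<phi>'\<^sup>2/H + 2\<phi>''\<^sup>2/H\<^sup>3\<close> plus \<open>\<lambda>(\<psi> + H\<phi>\<^sub>\<tau>\<^sup>2 + 2\<phi>\<phi>\<^sub>\<tau>')\<close> plus the derivative of an explicit
  potential. The endpoints are fixed, so \<open>X = X' = 0\<close> there and the potential reduces to
  \<open>(\<psi>' - 2\<phi>'\<phi>\<^sub>\<tau>')/H\<^sup>2\<close>.

  For a two-sided variation, the vertical component of \<open>\<partial>\<^sub>s\<V>(0, t)\<close> is \<open>\<ge> 0\<close> for every \<open>t\<close>,
  because each curve leaves the axis upwards, and vanishes at \<open>t = 0\<close>, where \<open>\<gamma>\<close> is horizontal.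
  So it is minimal at \<open>t = 0\<close>: its first \<open>t\<close>-derivative vanishes and its second is
  nonnegative, which gives \<open>\<phi>'(0) = 0\<close> and \<open>\<psi>'(0) \<le> 0\<close>; symmetrically at \<open>s = 2L\<close>.\<close>

section \<open>Partial derivatives of smooth maps of the plane\<close>

definition partial_s :: "(real \<times> real \<Rightarrow> 'b::real_normed_vector) \<Rightarrow> real \<times> real \<Rightarrow> 'b" where
  "partial_s f = (\<lambda>x. frechet_derivative f (at x) (1, 0))"

definition partial_t :: "(real \<times> real \<Rightarrow> 'b::real_normed_vector) \<Rightarrow> real \<times> real \<Rightarrow> 'b" where
  "partial_t f = (\<lambda>x. frechet_derivative f (at x) (0, 1))"

lemma smooth_open_differentiable_on: "smooth_open U f \<Longrightarrow> f differentiable_on U"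
  by (erule smooth_open.cases) blast

lemma smooth_open_partial_s: "smooth_open U f \<Longrightarrow> smooth_open U (partial_s f)"
  and smooth_open_partial_t: "smooth_open U f \<Longrightarrow> smooth_open U (partial_t f)"
  by (erule smooth_open.cases, simp add: partial_s_def partial_t_def Basis_prod_def)+

lemma smooth_open_continuous_on: "smooth_open U f \<Longrightarrow> continuous_on U f"
  by (rule differentiable_imp_continuous_on[OF smooth_open_differentiable_on])

lemma smooth_open_has_derivative:
  assumes "smooth_open U f" "open U" "x \<in> U"
  shows "(f has_derivative frechet_derivative f (at x)) (at x)"
proof -
  have "f differentiable (at x within U)"
    using smooth_open_differentiable_on[OF assms(1)] assms(3) by (auto simp: differentiable_on_def)
  then have "f differentiable (at x)" using at_within_open[OF assms(3,2)] by simp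
  then show ?thesis using frechet_derivative_works by blast
qed

lemma has_vector_derivative_partial_s:
  assumes "smooth_open U f" "open U" "(s, t) \<in> U"
  shows "((\<lambda>s. f (s, t)) has_vector_derivative partial_s f (s, t)) (at s within S)"
proof -
  have "((\<lambda>s. (s, t)) has_vector_derivative (1, 0)) (at s within S)"
    by (intro has_vector_derivative_Pair has_vector_derivative_id has_vector_derivative_const)
  from vector_derivative_diff_chain_within[OF this has_derivative_at_withinI[OF smooth_open_has_derivative[OF assms]]]
  show ?thesis unfolding partial_s_def o_def .
qed

lemma has_vector_derivative_partial_t:
  assumes "smooth_open U f" "open U" "(s, t) \<in> U"
  shows "((\<lambda>t. f (s, t)) has_vector_derivative partial_t f (s, t)) (at t within S)"
proof -
  have "((\<lambda>t. (s, t)) has_vector_derivative (0, 1)) (at t within S)"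
    by (intro has_vector_derivative_Pair has_vector_derivative_id has_vector_derivative_const)
  from vector_derivative_diff_chain_within[OF this has_derivative_at_withinI[OF smooth_open_has_derivative[OF assms]]]
  show ?thesis unfolding partial_t_def o_def .
qed

lemma frechet_derivative_cong_open:
  assumes "open U" "x \<in> U" "\<And>y. y \<in> U \<Longrightarrow> f y = g y"
  shows "frechet_derivative f (at x) = frechet_derivative g (at x)"
proof -
  have "(f has_derivative D) (at x) \<longleftrightarrow> (g has_derivative D) (at x)" for D
    using has_derivative_transform_within_open[OF _ assms(1,2)] assms(3) by metis
  then show ?thesis unfolding frechet_derivative_def by simp
qed

lemma partial_s_cong_open:
  "open U \<Longrightarrow> x \<in> U \<Longrightarrow> (\<And>y. y \<in> U \<Longrightarrow> f y = g y) \<Longrightarrow> partial_s f x = partial_s g x"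
  and partial_t_cong_open:
  "open U \<Longrightarrow> x \<in> U \<Longrightarrow> (\<And>y. y \<in> U \<Longrightarrow> f y = g y) \<Longrightarrow> partial_t f x = partial_t g x"
  unfolding partial_s_def partial_t_def by (metis frechet_derivative_cong_open)+

lemma closed_box_subset_ball:
  assumes "ball (s0, t0) e \<subseteq> U" "e > 0"
  shows "{s0 - e/3..s0 + e/3} \<times> {t0 - e/3..t0 + e/3} \<subseteq> U"
proof
  fix p assume p: "p \<in> {s0 - e/3..s0 + e/3} \<times> {t0 - e/3..t0 + e/3}"
  obtain s t where st: "p = (s, t)" by force
  have "dist (s0, t0) (s, t) = sqrt ((dist s0 s)\<^sup>2 + (dist t0 t)\<^sup>2)"
    by (simp add: dist_prod_def)
  also have "\<dots> \<le> \<bar>dist s0 s\<bar> + \<bar>dist t0 t\<bar>" by (rule sqrt_sum_squares_le_sum_abs)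
  also have "\<dots> < e" using p st assms(2) by (auto simp: dist_real_def)
  finally show "p \<in> U" using assms(1) st by auto
qed

text \<open>Schwarz's theorem: on a small box around \<open>x\<close>, differentiating
  \<open>f (s, t) - f (a, t) = \<integral>\<^sub>a\<^sup>s partial_s f (r, t) dr\<close> in \<open>t\<close> under the integral sign
  and then in \<open>s\<close> yields both mixed partials.\<close>

lemma partial_s_partial_t_commute:
  fixes f :: "real \<times> real \<Rightarrow> 'b::banach"
  assumes sm: "smooth_open U f" and U: "open U" and x: "x \<in> U"
  shows "partial_s (partial_t f) x = partial_t (partial_s f) x"
proof -
  obtain s0 t0 where x0: "x = (s0, t0)" by force
  obtain e0 where e0: "e0 > 0" "ball x e0 \<subseteq> U" using U x open_contains_ball by blast
  define a b c d where "a = s0 - e0/3" and "b = s0 + e0/3" and "c = t0 - e0/3" and "d = t0 + e0/3"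
  have box: "{a..b} \<times> {c..d} \<subseteq> U"
    using closed_box_subset_ball[of s0 t0 e0 U] e0 x0 unfolding a_def b_def c_def d_def by auto
  have ab: "a < b" "c < d" and s0: "s0 \<in> {a..b}" and t0: "t0 \<in> {c..d}"
    using e0 by (auto simp: a_def b_def c_def d_def)
  have f_s: "smooth_open U (partial_s f)" and f_st: "smooth_open U (partial_t (partial_s f))"
    and f_t: "smooth_open U (partial_t f)"
    using sm by (auto intro: smooth_open_partial_s smooth_open_partial_t)
  have cont_line: "continuous_on {a..s} (\<lambda>r. F (r, t))"
    if "continuous_on U F" "s \<in> {a..b}" "t \<in> {c..d}" for F :: "real \<times> real \<Rightarrow> 'b" and s t
    by (rule continuous_on_compose2[OF that(1)]) (use box that(2,3) in \<open>auto intro!: continuous_intros\<close>)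
  have mixed_integral: "partial_t f (s, t0) - partial_t f (a, t0) = integral {a..s} (\<lambda>r. partial_t (partial_s f) (r, t0))"
    if s: "s \<in> {a..b}" for s
  proof -
    have ftc: "f (s, t) - f (a, t) = integral {a..s} (\<lambda>r. partial_s f (r, t))" if t: "t \<in> {c..d}" for t
    proof -
      have "((\<lambda>r. partial_s f (r, t)) has_integral (f (s, t) - f (a, t))) {a..s}"
        using s t box
        by (intro fundamental_theorem_of_calculus has_vector_derivative_partial_s[OF sm U]) auto
      then show ?thesis by (simp add: integral_unique)
    qed
    have "((\<lambda>t. integral (cbox a s) (\<lambda>r. partial_s f (r, t))) has_vector_derivative
              integral (cbox a s) (\<lambda>r. partial_t (partial_s f) (r, t0))) (at t0 within {c..d})"
    proof (rule leibniz_rule_vector_derivative)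
      fix t r assume "t \<in> {c..d}" "r \<in> cbox a s"
      then have "(r, t) \<in> U" using box s by auto
      then show "((\<lambda>t. partial_s f (r, t)) has_vector_derivative partial_t (partial_s f) (r, t)) (at t within {c..d})"
        using has_vector_derivative_partial_t[OF f_s U] by blast
    next
      fix t assume "t \<in> {c..d}"
      then show "(\<lambda>r. partial_s f (r, t)) integrable_on cbox a s"
        using cont_line[OF smooth_open_continuous_on[OF f_s] s] integrable_continuous_real by auto
    next
      have "continuous_on ({c..d} \<times> cbox a s) (\<lambda>p. partial_t (partial_s f) (snd p, fst p))"
        by (rule continuous_on_compose2[OF smooth_open_continuous_on[OF f_st]])
          (use box s in \<open>auto intro!: continuous_intros\<close>)
      then show "continuous_on ({c..d} \<times> cbox a s) (\<lambda>(t, r). partial_t (partial_s f) (r, t))"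
        by (simp add: case_prod_unfold)
    qed (use t0 in auto)
    then have "((\<lambda>t. integral {a..s} (\<lambda>r. partial_s f (r, t))) has_vector_derivative
              integral {a..s} (\<lambda>r. partial_t (partial_s f) (r, t0))) (at t0 within {c..d})"
      by simp
    then have "((\<lambda>t. f (s, t) - f (a, t)) has_vector_derivative
              integral {a..s} (\<lambda>r. partial_t (partial_s f) (r, t0))) (at t0 within {c..d})"
      by (rule has_vector_derivative_transform_within[OF _ zero_less_one]) (use t0 ftc in auto)
    moreover have "((\<lambda>t. f (s, t) - f (a, t)) has_vector_derivative partial_t f (s, t0) - partial_t f (a, t0))
        (at t0 within {c..d})"
      using box s t0 ab by (auto intro!: derivative_intros has_vector_derivative_partial_t[OF sm U])
    ultimately show ?thesis
      using vector_derivative_unique_within_closed_interval[OF ab(2)] t0 by auto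
  qed
  have "((\<lambda>s. partial_t f (s, t0) - partial_t f (a, t0)) has_vector_derivative partial_s (partial_t f) (s0, t0))
      (at s0 within {a..b})"
    using has_vector_derivative_diff[OF has_vector_derivative_partial_s[OF f_t U] has_vector_derivative_const]
      box s0 t0 by (simp add: subset_iff)
  moreover have "((\<lambda>s. integral {a..s} (\<lambda>r. partial_t (partial_s f) (r, t0))) has_vector_derivative
      partial_t (partial_s f) (s0, t0)) (at s0 within {a..b})"
    using integral_has_vector_derivative[OF cont_line[OF smooth_open_continuous_on[OF f_st] _ t0] s0] ab
    by simp
  then have "((\<lambda>s. partial_t f (s, t0) - partial_t f (a, t0)) has_vector_derivative
      partial_t (partial_s f) (s0, t0)) (at s0 within {a..b})"
    by (rule has_vector_derivative_transform_within[OF _ zero_less_one]) (use s0 mixed_integral in auto)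
  ultimately show ?thesis
    using vector_derivative_unique_within_closed_interval[OF ab(1)] s0 x0 by auto
qed

lemma partial_t_partial_s_swap:
  fixes g :: "real \<times> real \<Rightarrow> 'b::banach"
  assumes g: "smooth_open U g" and U: "open U" and x: "x \<in> U"
  shows "partial_t (partial_s g) x = partial_s (partial_t g) x"
    and "partial_t (partial_s (partial_s g)) x = partial_s (partial_s (partial_t g)) x"
    and "partial_t (partial_t (partial_s g)) x = partial_s (partial_t (partial_t g)) x"
    and "partial_t (partial_t (partial_s (partial_s g))) x = partial_s (partial_s (partial_t (partial_t g))) x"
proof -
  have sw: "partial_t (partial_s f) y = partial_s (partial_t f) y" if "smooth_open U f" "y \<in> U" for f :: "real \<times> real \<Rightarrow> 'b" and y
    using partial_s_partial_t_commute[OF that(1) U that(2)] by simp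
  note gs = smooth_open_partial_s[OF g] and gt = smooth_open_partial_t[OF g]
  show 1: "partial_t (partial_s g) x = partial_s (partial_t g) x" by (rule sw[OF g x])
  have 2: "partial_t (partial_s g) y = partial_s (partial_t g) y" if "y \<in> U" for y by (rule sw[OF g that])
  show 3: "partial_t (partial_s (partial_s g)) x = partial_s (partial_s (partial_t g)) x"
    using sw[OF gs x] partial_s_cong_open[OF U x 2] by simp
  have 4: "partial_t (partial_s (partial_s g)) y = partial_s (partial_s (partial_t g)) y" if "y \<in> U" for y
    using sw[OF gs that] partial_s_cong_open[OF U that 2] by simp
  show "partial_t (partial_t (partial_s g)) x = partial_s (partial_t (partial_t g)) x"
    using partial_t_cong_open[OF U x 2] sw[OF gt x] by simp
  have "partial_t (partial_t (partial_s (partial_s g))) x = partial_s (partial_t (partial_s (partial_t g))) x"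
    using partial_t_cong_open[OF U x 4] sw[OF smooth_open_partial_s[OF gt] x] by simp
  also have "\<dots> = partial_s (partial_s (partial_t (partial_t g))) x"
    using partial_s_cong_open[OF U x] sw[OF gt] by blast
  finally show "partial_t (partial_t (partial_s (partial_s g))) x = partial_s (partial_s (partial_t (partial_t g))) x" .
qed

lemma dv_eqI:
  fixes f F :: "real \<Rightarrow> 'a::euclidean_space"
  assumes "a < b" "x \<in> {a..b}" "\<And>y. y \<in> {a..b} \<Longrightarrow> f y = F y"
    and "(F has_vector_derivative F') (at x within {a..b})"
  shows "dv {a..b} f x = F'"
proof -
  have "(f has_vector_derivative F') (at x within {a..b})"
    by (rule has_vector_derivative_transform_within[OF assms(4) zero_less_one]) (use assms in auto)
  then show ?thesis unfolding dv_def using vector_derivative_within_closed_interval assms(1,2) by blast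
qed

lemma has_vector_derivative_at_within_real:
  "(f has_real_derivative f') (at x) \<Longrightarrow> (f has_vector_derivative f') (at x within S)"
  by (simp add: has_real_derivative_iff_has_vector_derivative[symmetric] has_field_derivative_at_within)

lemma has_field_derivative_fst:
  "(f has_vector_derivative f') F \<Longrightarrow> ((\<lambda>x. fst (f x)) has_real_derivative fst f') F"
  and has_field_derivative_snd:
  "(f has_vector_derivative f') F \<Longrightarrow> ((\<lambda>x. snd (f x)) has_real_derivative snd f') F"
  unfolding has_vector_derivative_def has_field_derivative_def
  by (drule has_derivative_fst has_derivative_snd, erule has_derivative_eq_rhs, simp add: fun_eq_iff mult.commute)+

lemma has_field_derivative_inner:
  fixes P Q :: "real \<Rightarrow> 'a::real_inner"
  assumes "(P has_vector_derivative P') (at x within S)" "(Q has_vector_derivative Q') (at x within S)"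
  shows "((\<lambda>x. inner (P x) (Q x)) has_real_derivative inner P' (Q x) + inner (P x) Q') (at x within S)"
  using has_derivative_inner[OF assms[unfolded has_vector_derivative_def]]
  unfolding has_field_derivative_def
  by (rule has_derivative_eq_rhs) (simp add: fun_eq_iff algebra_simps)

lemma has_field_derivative_integral_parametric:
  fixes f f' :: "real \<Rightarrow> real \<Rightarrow> real"
  assumes T: "convex T" "t \<in> T"
    and f: "\<And>t s. t \<in> T \<Longrightarrow> s \<in> {a..b} \<Longrightarrow> ((\<lambda>t. f s t) has_real_derivative f' s t) (at t within T)"
    and cont_f: "continuous_on (T \<times> {a..b}) (\<lambda>p. f (snd p) (fst p))"
    and cont_f': "continuous_on (T \<times> {a..b}) (\<lambda>p. f' (snd p) (fst p))"
  shows "((\<lambda>t. integral {a..b} (\<lambda>s. f s t)) has_real_derivative integral {a..b} (\<lambda>s. f' s t)) (at t within T)"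
proof -
  have "continuous_on {a..b} (\<lambda>s. (\<lambda>p. f (snd p) (fst p)) (u, s))" if "u \<in> T" for u
    by (rule continuous_on_compose2[OF cont_f]) (use that in \<open>auto intro!: continuous_intros\<close>)
  then have "((\<lambda>t. integral (cbox a b) (\<lambda>s. f s t)) has_real_derivative integral (cbox a b) (\<lambda>s. f' s t)) (at t within T)"
    using cont_f' by (intro leibniz_rule_field_derivative[where f="\<lambda>t s. f s t"] f T integrable_continuous_real)
      (auto simp: case_prod_unfold intro: integrable_continuous_interval)
  then show ?thesis by simp
qed

definition cross2 :: "real \<times> real \<Rightarrow> real \<times> real \<Rightarrow> real" where
  "cross2 p q = fst p * snd q - snd p * fst q"

lemma inner_real_pair: "inner p q = fst p * fst q + snd p * snd q"
  by (cases p, cases q) (simp add: inner_Pair)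

lemma inner_perp: "inner p (perp q) = cross2 p q"
  by (cases p, cases q) (simp add: cross2_def perp_def inner_Pair)

lemma has_field_derivative_cross2:
  assumes "(P has_vector_derivative P') (at x within S)" "(Q has_vector_derivative Q') (at x within S)"
  shows "((\<lambda>x. cross2 (P x) (Q x)) has_real_derivative cross2 P' (Q x) + cross2 (P x) Q') (at x within S)"
proof -
  note d = has_field_derivative_fst[OF assms(1)] has_field_derivative_snd[OF assms(1)]
    has_field_derivative_fst[OF assms(2)] has_field_derivative_snd[OF assms(2)]
  have "((\<lambda>x. fst (P x) * snd (Q x) - snd (P x) * fst (Q x)) has_real_derivative
     (fst (P x) * snd Q' + fst P' * snd (Q x)) - (snd (P x) * fst Q' + snd P' * fst (Q x))) (at x within S)"
    by (intro DERIV_diff DERIV_mult' d)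
  then show ?thesis unfolding cross2_def by (simp add: algebra_simps)
qed

text \<open>The energy density is \<open>sq_div a b\<close> with \<open>a = |\<gamma>'|\<^sup>2\<close> and \<open>b = \<gamma>' \<times> \<gamma>''\<close>; \<open>sq_div'\<close> and
  \<open>sq_div''\<close> are its first and second derivatives along a family \<open>(a, b)\<close> whose derivatives are
  \<open>(a', b')\<close> and \<open>(a'', b'')\<close>.\<close>

definition sq_div :: "real \<Rightarrow> real \<Rightarrow> real" where
  "sq_div a b = a\<^sup>2 / b"

definition sq_div' :: "real \<Rightarrow> real \<Rightarrow> real \<Rightarrow> real \<Rightarrow> real" where
  "sq_div' a a' b b' = 2 * a * a' / b - a\<^sup>2 * b' / b\<^sup>2"

definition sq_div'' :: "real \<Rightarrow> real \<Rightarrow> real \<Rightarrow> real \<Rightarrow> real \<Rightarrow> real \<Rightarrow> real" where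
  "sq_div'' a a' a'' b b' b'' =
     2 * a'\<^sup>2 / b + 2 * a * a'' / b - 4 * a * a' * b' / b\<^sup>2 - a\<^sup>2 * b'' / b\<^sup>2 + 2 * a\<^sup>2 * b'\<^sup>2 / b ^ 3"

lemma has_field_derivative_sq_div:
  assumes "(a has_real_derivative a') (at x within S)" "(b has_real_derivative b') (at x within S)" "b x \<noteq> 0"
  shows "((\<lambda>x. sq_div (a x) (b x)) has_real_derivative sq_div' (a x) a' (b x) b') (at x within S)"
proof -
  have "((\<lambda>x. (a x)\<^sup>2 / b x) has_real_derivative
     ((of_nat 2 * (a' * a x ^ (2 - Suc 0))) * b x - (a x)\<^sup>2 * b') / (b x * b x)) (at x within S)"
    (is "(_ has_real_derivative ?D) _")
    by (intro DERIV_divide DERIV_power assms)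
  moreover have "?D = sq_div' (a x) a' (b x) b'"
    unfolding sq_div'_def using assms(3) by (simp add: field_simps power2_eq_square)
  ultimately show ?thesis unfolding sq_div_def by simp
qed

lemma has_field_derivative_sq_div':
  assumes "(a has_real_derivative a' x) (at x within S)" "(a' has_real_derivative a'') (at x within S)"
    and "(b has_real_derivative b' x) (at x within S)" "(b' has_real_derivative b'') (at x within S)"
    and "b x \<noteq> 0"
  shows "((\<lambda>x. sq_div' (a x) (a' x) (b x) (b' x)) has_real_derivative sq_div'' (a x) (a' x) a'' (b x) (b' x) b'')
    (at x within S)"
proof -
  have "((\<lambda>x. 2 * a x * a' x / b x - (a x)\<^sup>2 * b' x / (b x)\<^sup>2) has_real_derivative
     ((2 * a x * a'' + 2 * a' x * a' x) * b x - 2 * a x * a' x * b' x) / (b x * b x)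
     - (((a x)\<^sup>2 * b'' + (of_nat 2 * (a' x * a x ^ (2 - Suc 0))) * b' x) * (b x)\<^sup>2
        - (a x)\<^sup>2 * b' x * (of_nat 2 * (b' x * b x ^ (2 - Suc 0)))) / ((b x)\<^sup>2 * (b x)\<^sup>2)) (at x within S)"
    (is "(_ has_real_derivative ?D) _")
    using assms(5) by (intro DERIV_diff DERIV_divide DERIV_mult' DERIV_cmult DERIV_power assms(1-4)) auto
  moreover have "?D = sq_div'' (a x) (a' x) a'' (b x) (b' x) b''"
    unfolding sq_div''_def using assms(5) by (simp add: field_simps power2_eq_square power3_eq_cube)
  ultimately show ?thesis unfolding sq_div'_def by simp
qed

section \<open>The energy density along a smooth map of the plane\<close>

text \<open>For the slices \<open>\<gamma>\<^sub>t = g(\<cdot>, t)\<close> of a smooth map \<open>g\<close>: \<open>speed_sq = |\<gamma>\<^sub>t'|\<^sup>2\<close> and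
  \<open>turning = \<gamma>\<^sub>t' \<times> \<gamma>\<^sub>t''\<close>, so that \<open>H = turning / |\<gamma>\<^sub>t'|\<^sup>3\<close>; the suffixes \<open>_t\<close>, \<open>_tt\<close> mark
  \<open>t\<close>-derivatives.\<close>

definition speed_sq :: "(real \<times> real \<Rightarrow> real \<times> real) \<Rightarrow> real \<Rightarrow> real \<Rightarrow> real" where
  "speed_sq g s t = inner (partial_s g (s, t)) (partial_s g (s, t))"

definition speed_sq_t :: "(real \<times> real \<Rightarrow> real \<times> real) \<Rightarrow> real \<Rightarrow> real \<Rightarrow> real" where
  "speed_sq_t g s t = 2 * inner (partial_s g (s, t)) (partial_t (partial_s g) (s, t))"

definition speed_sq_tt :: "(real \<times> real \<Rightarrow> real \<times> real) \<Rightarrow> real \<Rightarrow> real \<Rightarrow> real" where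
  "speed_sq_tt g s t = 2 * (inner (partial_t (partial_s g) (s, t)) (partial_t (partial_s g) (s, t))
     + inner (partial_s g (s, t)) (partial_t (partial_t (partial_s g)) (s, t)))"

definition turning :: "(real \<times> real \<Rightarrow> real \<times> real) \<Rightarrow> real \<Rightarrow> real \<Rightarrow> real" where
  "turning g s t = cross2 (partial_s g (s, t)) (partial_s (partial_s g) (s, t))"

definition turning_t :: "(real \<times> real \<Rightarrow> real \<times> real) \<Rightarrow> real \<Rightarrow> real \<Rightarrow> real" where
  "turning_t g s t = cross2 (partial_t (partial_s g) (s, t)) (partial_s (partial_s g) (s, t))
     + cross2 (partial_s g (s, t)) (partial_t (partial_s (partial_s g)) (s, t))"

definition turning_tt :: "(real \<times> real \<Rightarrow> real \<times> real) \<Rightarrow> real \<Rightarrow> real \<Rightarrow> real" where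
  "turning_tt g s t = cross2 (partial_t (partial_t (partial_s g)) (s, t)) (partial_s (partial_s g) (s, t))
     + 2 * cross2 (partial_t (partial_s g) (s, t)) (partial_t (partial_s (partial_s g)) (s, t))
     + cross2 (partial_s g (s, t)) (partial_t (partial_t (partial_s (partial_s g))) (s, t))"

definition energy :: "(real \<times> real \<Rightarrow> real \<times> real) \<Rightarrow> real \<Rightarrow> real \<Rightarrow> real" where
  "energy g s t = sq_div (speed_sq g s t) (turning g s t)"

definition energy_t :: "(real \<times> real \<Rightarrow> real \<times> real) \<Rightarrow> real \<Rightarrow> real \<Rightarrow> real" where
  "energy_t g s t = sq_div' (speed_sq g s t) (speed_sq_t g s t) (turning g s t) (turning_t g s t)"

definition energy_tt :: "(real \<times> real \<Rightarrow> real \<times> real) \<Rightarrow> real \<Rightarrow> real \<Rightarrow> real" where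
  "energy_tt g s t = sq_div'' (speed_sq g s t) (speed_sq_t g s t) (speed_sq_tt g s t)
     (turning g s t) (turning_t g s t) (turning_tt g s t)"

context
  fixes U :: "(real \<times> real) set" and g :: "real \<times> real \<Rightarrow> real \<times> real"
  assumes g: "smooth_open U g" and U: "open U"
begin

lemma has_field_derivative_speed_sq:
  assumes "(s, t) \<in> U"
  shows "((\<lambda>t. speed_sq g s t) has_real_derivative speed_sq_t g s t) (at t within S)"
proof -
  have "((\<lambda>t. partial_s g (s, t)) has_vector_derivative partial_t (partial_s g) (s, t)) (at t within S)"
    using has_vector_derivative_partial_t[OF smooth_open_partial_s[OF g] U assms] .
  from has_field_derivative_inner[OF this this] show ?thesis
    unfolding speed_sq_def speed_sq_t_def by (simp add: inner_commute)
qed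

lemma has_field_derivative_speed_sq_t:
  assumes "(s, t) \<in> U"
  shows "((\<lambda>t. speed_sq_t g s t) has_real_derivative speed_sq_tt g s t) (at t within S)"
proof -
  have "((\<lambda>t. partial_s g (s, t)) has_vector_derivative partial_t (partial_s g) (s, t)) (at t within S)"
    and "((\<lambda>t. partial_t (partial_s g) (s, t)) has_vector_derivative partial_t (partial_t (partial_s g)) (s, t))
      (at t within S)"
    using g by (auto intro: has_vector_derivative_partial_t[OF _ U assms] smooth_open_partial_s smooth_open_partial_t)
  from DERIV_cmult[OF has_field_derivative_inner[OF this], of 2] show ?thesis
    unfolding speed_sq_t_def speed_sq_tt_def by (simp add: inner_commute)
qed

lemma has_field_derivative_turning:
  "(s, t) \<in> U \<Longrightarrow> ((\<lambda>t. turning g s t) has_real_derivative turning_t g s t) (at t within S)"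
  using has_field_derivative_cross2[OF has_vector_derivative_partial_t has_vector_derivative_partial_t,
      OF smooth_open_partial_s[OF g] U _ smooth_open_partial_s[OF smooth_open_partial_s[OF g]] U]
  unfolding turning_def turning_t_def by simp

lemma has_field_derivative_turning_t:
  assumes "(s, t) \<in> U"
  shows "((\<lambda>t. turning_t g s t) has_real_derivative turning_tt g s t) (at t within S)"
proof -
  have "smooth_open U (partial_s g)" "smooth_open U (partial_t (partial_s g))"
    "smooth_open U (partial_s (partial_s g))" "smooth_open U (partial_t (partial_s (partial_s g)))"
    using g by (auto intro: smooth_open_partial_s smooth_open_partial_t)
  then have "((\<lambda>t. turning_t g s t) has_real_derivative
     (cross2 (partial_t (partial_t (partial_s g)) (s, t)) (partial_s (partial_s g) (s, t))
      + cross2 (partial_t (partial_s g) (s, t)) (partial_t (partial_s (partial_s g)) (s, t)))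
   + (cross2 (partial_t (partial_s g) (s, t)) (partial_t (partial_s (partial_s g)) (s, t))
      + cross2 (partial_s g (s, t)) (partial_t (partial_t (partial_s (partial_s g))) (s, t)))) (at t within S)"
    unfolding turning_t_def
    by (intro DERIV_add has_field_derivative_cross2 has_vector_derivative_partial_t[OF _ U assms])
  then show ?thesis unfolding turning_tt_def by (simp add: algebra_simps)
qed

lemma has_field_derivative_energy:
  "(s, t) \<in> U \<Longrightarrow> turning g s t \<noteq> 0 \<Longrightarrow> ((\<lambda>t. energy g s t) has_real_derivative energy_t g s t) (at t within S)"
  unfolding energy_def energy_t_def
  by (intro has_field_derivative_sq_div has_field_derivative_speed_sq has_field_derivative_turning)

lemma has_field_derivative_energy_t:
  "(s, t) \<in> U \<Longrightarrow> turning g s t \<noteq> 0 \<Longrightarrow> ((\<lambda>t. energy_t g s t) has_real_derivative energy_tt g s t) (at t within S)"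
  unfolding energy_t_def energy_tt_def
  by (intro has_field_derivative_sq_div' has_field_derivative_speed_sq has_field_derivative_turning
      has_field_derivative_speed_sq_t has_field_derivative_turning_t)

lemma continuous_on_energy:
  assumes box: "A \<times> B \<subseteq> U" and nz: "\<And>s t. s \<in> A \<Longrightarrow> t \<in> B \<Longrightarrow> turning g s t \<noteq> 0"
  shows "continuous_on (B \<times> A) (\<lambda>p. energy g (snd p) (fst p))"
    and "continuous_on (B \<times> A) (\<lambda>p. energy_t g (snd p) (fst p))"
    and "continuous_on (B \<times> A) (\<lambda>p. energy_tt g (snd p) (fst p))"
proof -
  have swap: "continuous_on (B \<times> A) (\<lambda>p. F (snd p, fst p))" if "smooth_open U F" for F :: "real \<times> real \<Rightarrow> real \<times> real"
    by (rule continuous_on_compose2[OF smooth_open_continuous_on[OF that]])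
      (use box in \<open>auto intro!: continuous_intros\<close>)
  note c = swap[OF smooth_open_partial_s[OF g]]
    swap[OF smooth_open_partial_t[OF smooth_open_partial_s[OF g]]]
    swap[OF smooth_open_partial_s[OF smooth_open_partial_s[OF g]]]
    swap[OF smooth_open_partial_t[OF smooth_open_partial_s[OF smooth_open_partial_s[OF g]]]]
    swap[OF smooth_open_partial_t[OF smooth_open_partial_t[OF smooth_open_partial_s[OF g]]]]
    swap[OF smooth_open_partial_t[OF smooth_open_partial_t[OF smooth_open_partial_s[OF smooth_open_partial_s[OF g]]]]]
  have nz': "\<forall>p\<in>B \<times> A. turning g (snd p) (fst p) \<noteq> 0" using nz by auto
  have parts: "continuous_on (B \<times> A) (\<lambda>p. speed_sq g (snd p) (fst p))"
    "continuous_on (B \<times> A) (\<lambda>p. speed_sq_t g (snd p) (fst p))"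
    "continuous_on (B \<times> A) (\<lambda>p. speed_sq_tt g (snd p) (fst p))"
    "continuous_on (B \<times> A) (\<lambda>p. turning g (snd p) (fst p))"
    "continuous_on (B \<times> A) (\<lambda>p. turning_t g (snd p) (fst p))"
    "continuous_on (B \<times> A) (\<lambda>p. turning_tt g (snd p) (fst p))"
    unfolding speed_sq_def speed_sq_t_def speed_sq_tt_def turning_def turning_t_def turning_tt_def
      cross2_def inner_real_pair
    by (intro continuous_intros c)+
  show "continuous_on (B \<times> A) (\<lambda>p. energy g (snd p) (fst p))"
    "continuous_on (B \<times> A) (\<lambda>p. energy_t g (snd p) (fst p))"
    "continuous_on (B \<times> A) (\<lambda>p. energy_tt g (snd p) (fst p))"
    unfolding energy_def energy_t_def energy_tt_def sq_div_def sq_div'_def sq_div''_def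
    using nz' by (intro continuous_intros parts; simp)+
qed

end

section \<open>The explicit curve\<close>

text \<open>With \<open>\<theta> = (\<pi> / \<sigma>) a\<close> the curve \<open>\<gamma>(x\<^sub>0, L)\<close> has unit tangent \<open>-(cos \<theta>, sin \<theta>)\<close>;
  \<open>\<theta>\<close> grows from \<open>-\<pi>\<close> to \<open>\<pi>\<close> at the rate \<open>H\<close>, and \<open>radius_ex = 1 / H\<close>. Everything is
  smooth on the open interval \<open>dom_ex\<close> of radius \<open>k > L\<close> around \<open>L\<close>, which contains \<open>[0, 2L]\<close>.\<close>

abbreviation root_ex :: "real \<Rightarrow> real \<Rightarrow> real \<Rightarrow> real" where
  "root_ex x0 L s \<equiv> sqrt ((kk x0 L)\<^sup>2 - (s - L)\<^sup>2)"

definition dom_ex :: "real \<Rightarrow> real \<Rightarrow> real set" where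
  "dom_ex x0 L = {s. \<bar>s - L\<bar> < kk x0 L}"

definition angle_ex :: "real \<Rightarrow> real \<Rightarrow> real \<Rightarrow> real" where
  "angle_ex x0 L s = pi / sig x0 L * aa x0 L s"

definition tangent_ex :: "real \<Rightarrow> real \<Rightarrow> real \<Rightarrow> real \<times> real" where
  "tangent_ex x0 L s = (- cos (angle_ex x0 L s), - sin (angle_ex x0 L s))"

definition normal_ex :: "real \<Rightarrow> real \<Rightarrow> real \<Rightarrow> real \<times> real" where
  "normal_ex x0 L s = (- sin (angle_ex x0 L s), cos (angle_ex x0 L s))"

definition radius_ex :: "real \<Rightarrow> real \<Rightarrow> real \<Rightarrow> real" where
  "radius_ex x0 L s = sig x0 L / pi * root_ex x0 L s"

definition radius_ex' :: "real \<Rightarrow> real \<Rightarrow> real \<Rightarrow> real" where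
  "radius_ex' x0 L s = - (sig x0 L / pi) * (s - L) / root_ex x0 L s"

definition radius_ex'' :: "real \<Rightarrow> real \<Rightarrow> real \<Rightarrow> real" where
  "radius_ex'' x0 L s = - (sig x0 L / pi) * (kk x0 L)\<^sup>2 / (root_ex x0 L s) ^ 3"

definition curv_ex :: "real \<Rightarrow> real \<Rightarrow> real \<Rightarrow> real" where
  "curv_ex x0 L s = 1 / radius_ex x0 L s"

definition curv_ex' :: "real \<Rightarrow> real \<Rightarrow> real \<Rightarrow> real" where
  "curv_ex' x0 L s = - radius_ex' x0 L s / (radius_ex x0 L s)\<^sup>2"

context
  fixes x0 L :: real
  assumes x0: "0 < x0" and xL: "3 * x0 < L"
begin

lemma L_pos: "0 < L"
  using x0 xL by simp

lemma sig_bounds: "0 < sig x0 L" "sig x0 L < pi / 2"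
proof -
  have "sqrt (x0 / (L + x0)) < sqrt (1 / 4)"
    using x0 xL by (subst real_sqrt_less_iff) (simp add: field_simps)
  also have "sqrt (1 / 4 :: real) = 1 / 2" by (simp add: real_sqrt_divide)
  finally show "sig x0 L < pi / 2" unfolding sig_def by (simp add: field_simps)
  show "0 < sig x0 L" unfolding sig_def using x0 xL by simp
qed

lemma sig_sq: "(sig x0 L / pi)\<^sup>2 = x0 / (L + x0)"
  using x0 xL by (simp add: sig_def power_mult_distrib)

lemma sin_sig: "0 < sin (sig x0 L)" "sin (sig x0 L) < 1"
proof -
  show "0 < sin (sig x0 L)" using sig_bounds by (intro sin_gt_zero) auto
  have "sin (sig x0 L) < sin (pi / 2)" using sig_bounds by (intro sin_monotone_2pi) auto
  then show "sin (sig x0 L) < 1" by simp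
qed

lemma sig_ne: "sig x0 L \<noteq> 0" "pi + sig x0 L \<noteq> 0" "pi - sig x0 L \<noteq> 0"
  using sig_bounds pi_gt_zero by auto

lemma kk_gt: "L < kk x0 L" "0 < kk x0 L"
proof -
  show "L < kk x0 L" using sin_sig L_pos by (simp add: kk_def less_divide_eq)
  then show "0 < kk x0 L" using L_pos by simp
qed

lemma interval_subset_dom_ex: "s \<in> {0..2*L} \<Longrightarrow> s \<in> dom_ex x0 L"
  using kk_gt unfolding dom_ex_def by auto

context
  fixes s assumes s: "s \<in> dom_ex x0 L"
begin

lemma arcsin_arg_bounds: "-1 < (s - L) / kk x0 L" "(s - L) / kk x0 L < 1"
  using s kk_gt unfolding dom_ex_def by (auto simp: field_simps abs_less_iff)

lemma root_ex_arg_pos: "0 < (kk x0 L)\<^sup>2 - (s - L)\<^sup>2"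
proof -
  have "\<bar>s - L\<bar>\<^sup>2 < \<bar>kk x0 L\<bar>\<^sup>2" using s kk_gt unfolding dom_ex_def by (intro power_strict_mono) auto
  then show ?thesis by simp
qed

lemma kk_cos_aa: "kk x0 L * cos (aa x0 L s) = root_ex x0 L s"
proof -
  have "(kk x0 L)\<^sup>2 - (s - L)\<^sup>2 = (kk x0 L)\<^sup>2 * (1 - ((s - L) / kk x0 L)\<^sup>2)"
    using kk_gt by (simp add: field_simps power2_eq_square)
  then have "root_ex x0 L s = kk x0 L * sqrt (1 - ((s - L) / kk x0 L)\<^sup>2)"
    using kk_gt by (simp add: real_sqrt_mult)
  then show ?thesis using cos_arcsin arcsin_arg_bounds unfolding aa_def by simp
qed

lemma radius_ex_pos: "0 < radius_ex x0 L s"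
  unfolding radius_ex_def using sig_bounds root_ex_arg_pos by simp

lemma has_field_derivative_aa: "(aa x0 L has_real_derivative 1 / root_ex x0 L s) (at s)"
proof -
  have "((\<lambda>s. arcsin ((s - L) / kk x0 L)) has_real_derivative
       inverse (sqrt (1 - ((s - L) / kk x0 L)\<^sup>2)) * (1 / kk x0 L)) (at s)"
    using kk_gt by (auto intro!: derivative_eq_intros arcsin_arg_bounds)
  moreover have "inverse (sqrt (1 - ((s - L) / kk x0 L)\<^sup>2)) * (1 / kk x0 L) = 1 / root_ex x0 L s"
    using kk_cos_aa cos_arcsin[OF less_imp_le less_imp_le, OF arcsin_arg_bounds] unfolding aa_def
    by (simp add: field_simps)
  ultimately show ?thesis unfolding aa_def[abs_def] by simp
qed

lemma has_field_derivative_angle_ex: "(angle_ex x0 L has_real_derivative curv_ex x0 L s) (at s)"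
proof -
  have "((\<lambda>s. pi / sig x0 L * aa x0 L s) has_real_derivative pi / sig x0 L * (1 / root_ex x0 L s)) (at s)"
    by (intro DERIV_cmult has_field_derivative_aa)
  moreover have "pi / sig x0 L * (1 / root_ex x0 L s) = curv_ex x0 L s"
    unfolding curv_ex_def radius_ex_def using sig_ne by (simp add: field_simps)
  ultimately show ?thesis unfolding angle_ex_def[abs_def] by simp
qed

lemma has_field_derivative_sin_aa:
  assumes "c \<noteq> 0"
  shows "((\<lambda>s. 1 / c * sin (c * aa x0 L s)) has_real_derivative cos (c * aa x0 L s) / root_ex x0 L s) (at s)"
  using DERIV_cmult[OF DERIV_chain2[OF DERIV_sin DERIV_cmult[OF has_field_derivative_aa]], of "1 / c" c] assms
  by simp

lemma has_field_derivative_cos_aa: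
  assumes "c \<noteq> 0"
  shows "((\<lambda>s. 1 / c * cos (c * aa x0 L s)) has_real_derivative - sin (c * aa x0 L s) / root_ex x0 L s) (at s)"
  using DERIV_cmult[OF DERIV_chain2[OF DERIV_cos DERIV_cmult[OF has_field_derivative_aa]], of "1 / c" c] assms
  by simp

text \<open>With \<open>p = (\<pi> + \<sigma>) / \<sigma>\<close> and \<open>m = (\<pi> - \<sigma>) / \<sigma>\<close> we have \<open>p a = \<theta> + a\<close> and \<open>m a = \<theta> - a\<close>, so
  sum-to-product and \<open>k cos a = root_ex\<close> collapse the derivatives of \<open>\<gamma>\<close> to \<open>-(cos \<theta>, sin \<theta>)\<close>.\<close>

lemma has_vector_derivative_gamma_ex: "(gamma_ex x0 L has_vector_derivative tangent_ex x0 L s) (at s)"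
proof -
  define p m where "p = (pi + sig x0 L) / sig x0 L" and "m = (pi - sig x0 L) / sig x0 L"
  define C where "C = pi * x0 / (sig x0 L * tan (sig x0 L))"
  have pm: "p \<noteq> 0" "m \<noteq> 0" "sig x0 L / (pi + sig x0 L) = 1 / p" "sig x0 L / (pi - sig x0 L) = 1 / m"
    using sig_ne unfolding p_def m_def by auto
  have angles: "p * aa x0 L s = angle_ex x0 L s + aa x0 L s" "m * aa x0 L s = angle_ex x0 L s - aa x0 L s"
    unfolding p_def m_def angle_ex_def using sig_ne by (simp_all add: field_simps)
  have r: "root_ex x0 L s > 0" using root_ex_arg_pos by simp
  have gamma: "gamma_ex x0 L = (\<lambda>s. (- kk x0 L / 2 * (1 / p * sin (p * aa x0 L s) + 1 / m * sin (m * aa x0 L s)),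
      kk x0 L / 2 * (1 / p * cos (p * aa x0 L s) + 1 / m * cos (m * aa x0 L s)) + C))"
    unfolding gamma_ex_def Let_def pm(3,4) p_def m_def C_def by simp
  have "((\<lambda>s. - kk x0 L / 2 * (1 / p * sin (p * aa x0 L s) + 1 / m * sin (m * aa x0 L s))) has_real_derivative
      - kk x0 L / 2 * (cos (p * aa x0 L s) / root_ex x0 L s + cos (m * aa x0 L s) / root_ex x0 L s)) (at s)"
    by (intro DERIV_cmult DERIV_add has_field_derivative_sin_aa pm)
  moreover have "- kk x0 L / 2 * (cos (p * aa x0 L s) / root_ex x0 L s + cos (m * aa x0 L s) / root_ex x0 L s)
      = - cos (angle_ex x0 L s)"
    using r kk_cos_aa unfolding angles cos_add cos_diff by (simp add: field_simps)
  moreover have "((\<lambda>s. kk x0 L / 2 * (1 / p * cos (p * aa x0 L s) + 1 / m * cos (m * aa x0 L s)) + C)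
      has_real_derivative
      kk x0 L / 2 * (- sin (p * aa x0 L s) / root_ex x0 L s + - sin (m * aa x0 L s) / root_ex x0 L s) + 0) (at s)"
    by (intro DERIV_cmult DERIV_add has_field_derivative_cos_aa pm DERIV_const)
  moreover have "kk x0 L / 2 * (- sin (p * aa x0 L s) / root_ex x0 L s + - sin (m * aa x0 L s) / root_ex x0 L s) + 0
      = - sin (angle_ex x0 L s)"
    using r kk_cos_aa unfolding angles sin_add sin_diff by (simp add: field_simps)
  ultimately show ?thesis
    unfolding gamma tangent_ex_def
    by (intro has_vector_derivative_Pair) (simp_all add: has_real_derivative_iff_has_vector_derivative)
qed

lemma has_vector_derivative_tangent_ex:
  "(tangent_ex x0 L has_vector_derivative (- curv_ex x0 L s) *\<^sub>R normal_ex x0 L s) (at s)"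
proof -
  have "((\<lambda>s. (- cos (angle_ex x0 L s), - sin (angle_ex x0 L s))) has_vector_derivative
        (- (- sin (angle_ex x0 L s) * curv_ex x0 L s), - (cos (angle_ex x0 L s) * curv_ex x0 L s))) (at s)"
    using has_field_derivative_angle_ex
    by (intro has_vector_derivative_Pair; unfold has_real_derivative_iff_has_vector_derivative[symmetric])
      (auto intro!: derivative_eq_intros)
  then show ?thesis unfolding tangent_ex_def[abs_def] normal_ex_def by (simp add: algebra_simps)
qed

lemma has_vector_derivative_normal_ex:
  "(normal_ex x0 L has_vector_derivative curv_ex x0 L s *\<^sub>R tangent_ex x0 L s) (at s)"
proof -
  have "((\<lambda>s. (- sin (angle_ex x0 L s), cos (angle_ex x0 L s))) has_vector_derivative
        (- (cos (angle_ex x0 L s) * curv_ex x0 L s), - sin (angle_ex x0 L s) * curv_ex x0 L s)) (at s)"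
    using has_field_derivative_angle_ex
    by (intro has_vector_derivative_Pair; unfold has_real_derivative_iff_has_vector_derivative[symmetric])
      (auto intro!: derivative_eq_intros)
  then show ?thesis unfolding normal_ex_def[abs_def] tangent_ex_def by (simp add: algebra_simps)
qed

lemma has_field_derivative_root_ex:
  "((\<lambda>s. root_ex x0 L s) has_real_derivative - (s - L) / root_ex x0 L s) (at s)"
proof -
  have "((\<lambda>s. (kk x0 L)\<^sup>2 - (s - L)\<^sup>2) has_real_derivative - (2 * (s - L))) (at s)"
    by (auto intro!: derivative_eq_intros)
  from DERIV_chain2[OF DERIV_real_sqrt[OF root_ex_arg_pos] this] show ?thesis
    by (rule DERIV_cong) (use root_ex_arg_pos in \<open>simp add: field_simps\<close>)
qed

lemma has_field_derivative_radius_ex: "(radius_ex x0 L has_real_derivative radius_ex' x0 L s) (at s)"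
  unfolding radius_ex_def[abs_def]
  by (rule DERIV_cong[OF DERIV_cmult[OF has_field_derivative_root_ex]]) (use root_ex_arg_pos in \<open>simp add: radius_ex'_def field_simps\<close>)

lemma has_field_derivative_radius_ex': "(radius_ex' x0 L has_real_derivative radius_ex'' x0 L s) (at s)"
proof -
  define r where "r = root_ex x0 L s"
  have r: "r > 0" "r * r = (kk x0 L)\<^sup>2 - (s - L)\<^sup>2" using root_ex_arg_pos r_def by auto
  have "((\<lambda>s. (s - L) / root_ex x0 L s) has_real_derivative
       (1 * r - (s - L) * (- (s - L) / r)) / (r * r)) (at s)"
    unfolding r_def by (rule DERIV_divide[OF _ has_field_derivative_root_ex]) (use r r_def in \<open>auto intro!: derivative_eq_intros\<close>)
  moreover have "(1 * r - (s - L) * (- (s - L) / r)) / (r * r) = (kk x0 L)\<^sup>2 / (r * r * r)"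
    using r by (simp add: field_simps power2_eq_square)
  ultimately have "((\<lambda>s. - (sig x0 L / pi) * ((s - L) / root_ex x0 L s)) has_real_derivative
          - (sig x0 L / pi) * ((kk x0 L)\<^sup>2 / (r * r * r))) (at s)"
    by (intro DERIV_cmult) simp
  then show ?thesis unfolding radius_ex'_def[abs_def] radius_ex''_def r_def[symmetric]
    by (simp add: power3_eq_cube)
qed

lemma has_field_derivative_curv_ex: "(curv_ex x0 L has_real_derivative curv_ex' x0 L s) (at s)"
proof -
  have "((\<lambda>s. 1 / radius_ex x0 L s) has_real_derivative
      (0 * radius_ex x0 L s - 1 * radius_ex' x0 L s) / (radius_ex x0 L s * radius_ex x0 L s)) (at s)"
    using radius_ex_pos by (intro DERIV_divide DERIV_const has_field_derivative_radius_ex) simp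
  then show ?thesis unfolding curv_ex_def[abs_def] curv_ex'_def by (simp add: power2_eq_square)
qed

text \<open>The equation \<open>2 + (H\<^sup>-\<^sup>2)'' = \<lambda>\<close> satisfied by \<open>\<gamma>(x\<^sub>0, L)\<close>, written for \<open>h = 1 / H\<close>.\<close>

lemma radius_ex_ode:
  "2 * (radius_ex' x0 L s)\<^sup>2 + 2 * radius_ex x0 L s * radius_ex'' x0 L s = lambda_ex x0 L - 2"
proof -
  define r c where "r = root_ex x0 L s" and "c = sig x0 L / pi"
  have r: "r > 0" "r * r = (kk x0 L)\<^sup>2 - (s - L)\<^sup>2" using root_ex_arg_pos r_def by auto
  have "2 * (radius_ex' x0 L s)\<^sup>2 + 2 * radius_ex x0 L s * radius_ex'' x0 L s
      = 2 * (- c * (s - L) / r)\<^sup>2 + 2 * (c * r) * (- c * (kk x0 L)\<^sup>2 / (r * r * r))"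
    unfolding radius_ex'_def radius_ex_def radius_ex''_def r_def c_def by (simp add: power3_eq_cube)
  also have "\<dots> = 2 * c\<^sup>2 * ((s - L)\<^sup>2 - r * r - (s - L)\<^sup>2) / (r * r)"
    using r by (simp add: field_simps power2_eq_square)
  also have "\<dots> = - 2 * c\<^sup>2" using r(1) by simp
  also have "\<dots> = lambda_ex x0 L - 2"
    unfolding c_def sig_sq lambda_ex_def using x0 xL by (simp add: field_simps)
  finally show ?thesis .
qed

end

lemma angle_ex_endpoints: "angle_ex x0 L 0 = - pi" "angle_ex x0 L (2*L) = pi"
proof -
  have k: "L / kk x0 L = sin (sig x0 L)" using sin_sig L_pos unfolding kk_def by simp
  have "aa x0 L 0 = arcsin (- sin (sig x0 L))" unfolding aa_def using k by (simp add: minus_divide_left)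
  also have "\<dots> = - sig x0 L" using sig_bounds arcsin_sin[of "- sig x0 L"] by simp
  finally show "angle_ex x0 L 0 = - pi" unfolding angle_ex_def using sig_ne by simp
  have "aa x0 L (2*L) = arcsin (sin (sig x0 L))" unfolding aa_def using k by simp
  also have "\<dots> = sig x0 L" using sig_bounds arcsin_sin[of "sig x0 L"] by simp
  finally show "angle_ex x0 L (2*L) = pi" unfolding angle_ex_def using sig_ne by simp
qed

lemma dv_gamma_ex:
  assumes s: "s \<in> {0..2*L}"
  shows "dv {0..2*L} (gamma_ex x0 L) s = tangent_ex x0 L s"
    and "dv {0..2*L} (dv {0..2*L} (gamma_ex x0 L)) s = (- curv_ex x0 L s) *\<^sub>R normal_ex x0 L s"
proof -
  have L2: "0 < 2 * L" using L_pos by simp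
  note dom = interval_subset_dom_ex
  have d1: "dv {0..2*L} (gamma_ex x0 L) y = tangent_ex x0 L y" if "y \<in> {0..2*L}" for y
    by (rule dv_eqI[OF L2 that refl has_vector_derivative_at_within]) (rule has_vector_derivative_gamma_ex[OF dom[OF that]])
  show "dv {0..2*L} (gamma_ex x0 L) s = tangent_ex x0 L s" using d1 s .
  show "dv {0..2*L} (dv {0..2*L} (gamma_ex x0 L)) s = (- curv_ex x0 L s) *\<^sub>R normal_ex x0 L s"
    by (rule dv_eqI[OF L2 s d1 has_vector_derivative_at_within])
      (assumption, rule has_vector_derivative_tangent_ex[OF dom[OF s]])
qed

lemma curv_gamma_ex: "s \<in> {0..2*L} \<Longrightarrow> curv L (gamma_ex x0 L) s = curv_ex x0 L s"
  and normal_gamma_ex: "s \<in> {0..2*L} \<Longrightarrow> normal L (gamma_ex x0 L) s = normal_ex x0 L s"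
  unfolding curv_def normal_def dv_gamma_ex
  by (simp_all add: tangent_ex_def normal_ex_def perp_def norm_Pair inner_Pair power2_eq_square algebra_simps)
    (simp add: distrib_left[symmetric])

end

section \<open>Normal and tangential coordinates along the explicit curve\<close>

definition ncomp :: "real \<Rightarrow> real \<Rightarrow> real \<times> real \<Rightarrow> real \<Rightarrow> real" where
  "ncomp x0 L Z s = inner Z (normal_ex x0 L s)"

definition tcomp :: "real \<Rightarrow> real \<Rightarrow> real \<times> real \<Rightarrow> real \<Rightarrow> real" where
  "tcomp x0 L Z s = inner Z (tangent_ex x0 L s)"

lemma frame_ex:
  shows "ncomp x0 L (tangent_ex x0 L s) s = 0" "tcomp x0 L (tangent_ex x0 L s) s = 1"
    and "ncomp x0 L (normal_ex x0 L s) s = 1" "tcomp x0 L (normal_ex x0 L s) s = 0"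
    and "inner Z W = ncomp x0 L Z s * ncomp x0 L W s + tcomp x0 L Z s * tcomp x0 L W s"
    and "cross2 Z W = ncomp x0 L Z s * tcomp x0 L W s - tcomp x0 L Z s * ncomp x0 L W s"
proof -
  define c d where "c = cos (angle_ex x0 L s)" and "d = sin (angle_ex x0 L s)"
  have cd: "c * c = 1 - d * d" unfolding c_def d_def using sin_cos_squared_add3[of "angle_ex x0 L s"] by linarith
  have T: "tangent_ex x0 L s = (- c, - d)" and N: "normal_ex x0 L s = (- d, c)"
    unfolding tangent_ex_def normal_ex_def c_def d_def by auto
  show "ncomp x0 L (tangent_ex x0 L s) s = 0" "tcomp x0 L (tangent_ex x0 L s) s = 1"
    "ncomp x0 L (normal_ex x0 L s) s = 1" "tcomp x0 L (normal_ex x0 L s) s = 0"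
    unfolding ncomp_def tcomp_def T N inner_real_pair using cd by simp_all
  obtain z1 z2 w1 w2 where zw: "Z = (z1, z2)" "W = (w1, w2)" by force
  show "inner Z W = ncomp x0 L Z s * ncomp x0 L W s + tcomp x0 L Z s * tcomp x0 L W s"
    "cross2 Z W = ncomp x0 L Z s * tcomp x0 L W s - tcomp x0 L Z s * ncomp x0 L W s"
    unfolding ncomp_def tcomp_def T N zw inner_real_pair cross2_def using cd by (simp, algebra)+
qed

lemma ncomp_add: "ncomp x0 L (Z + W) s = ncomp x0 L Z s + ncomp x0 L W s"
  and tcomp_add: "tcomp x0 L (Z + W) s = tcomp x0 L Z s + tcomp x0 L W s"
  and ncomp_scaleR: "ncomp x0 L (c *\<^sub>R Z) s = c * ncomp x0 L Z s"
  and tcomp_scaleR: "tcomp x0 L (c *\<^sub>R Z) s = c * tcomp x0 L Z s"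
  unfolding ncomp_def tcomp_def by (simp_all add: inner_add_left)

text \<open>The coordinates \<open>\<langle>F(s,0), N\<rangle>\<close> and \<open>\<langle>F(s,0), T\<rangle>\<close> of a field \<open>F\<close> along \<open>\<gamma>\<close>, with their
  first and second \<open>s\<close>-derivatives computed by the Frenet equations \<open>T' = -H N\<close>, \<open>N' = H T\<close>.\<close>

definition ncoord :: "real \<Rightarrow> real \<Rightarrow> (real \<times> real \<Rightarrow> real \<times> real) \<Rightarrow> real \<Rightarrow> real" where
  "ncoord x0 L F s = ncomp x0 L (F (s, 0)) s"

definition ncoord' :: "real \<Rightarrow> real \<Rightarrow> (real \<times> real \<Rightarrow> real \<times> real) \<Rightarrow> real \<Rightarrow> real" where
  "ncoord' x0 L F s = ncomp x0 L (partial_s F (s, 0)) s + curv_ex x0 L s * tcomp x0 L (F (s, 0)) s"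

definition ncoord'' :: "real \<Rightarrow> real \<Rightarrow> (real \<times> real \<Rightarrow> real \<times> real) \<Rightarrow> real \<Rightarrow> real" where
  "ncoord'' x0 L F s = ncomp x0 L (partial_s (partial_s F) (s, 0)) s
     + 2 * curv_ex x0 L s * tcomp x0 L (partial_s F (s, 0)) s
     + curv_ex' x0 L s * tcomp x0 L (F (s, 0)) s - (curv_ex x0 L s)\<^sup>2 * ncomp x0 L (F (s, 0)) s"

definition tcoord :: "real \<Rightarrow> real \<Rightarrow> (real \<times> real \<Rightarrow> real \<times> real) \<Rightarrow> real \<Rightarrow> real" where
  "tcoord x0 L F s = tcomp x0 L (F (s, 0)) s"

definition tcoord' :: "real \<Rightarrow> real \<Rightarrow> (real \<times> real \<Rightarrow> real \<times> real) \<Rightarrow> real \<Rightarrow> real" where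
  "tcoord' x0 L F s = tcomp x0 L (partial_s F (s, 0)) s - curv_ex x0 L s * ncomp x0 L (F (s, 0)) s"

definition tcoord'' :: "real \<Rightarrow> real \<Rightarrow> (real \<times> real \<Rightarrow> real \<times> real) \<Rightarrow> real \<Rightarrow> real" where
  "tcoord'' x0 L F s = tcomp x0 L (partial_s (partial_s F) (s, 0)) s
     - 2 * curv_ex x0 L s * ncomp x0 L (partial_s F (s, 0)) s
     - curv_ex' x0 L s * ncomp x0 L (F (s, 0)) s - (curv_ex x0 L s)\<^sup>2 * tcomp x0 L (F (s, 0)) s"

context
  fixes x0 L :: real and U :: "(real \<times> real) set"
  assumes x0: "0 < x0" and xL: "3 * x0 < L" and U: "open U" and box: "{0..2*L} \<times> {0} \<subseteq> U"
begin

context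
  fixes s assumes s: "s \<in> {0..2*L}"
begin

context
  fixes F :: "real \<times> real \<Rightarrow> real \<times> real" assumes F: "smooth_open U F"
begin

lemma has_field_derivative_ncomp:
  "((\<lambda>s. ncomp x0 L (F (s, 0)) s) has_real_derivative
      ncomp x0 L (partial_s F (s, 0)) s + curv_ex x0 L s * tcomp x0 L (F (s, 0)) s) (at s)"
  using has_field_derivative_inner[OF has_vector_derivative_partial_s[OF F U]
      has_vector_derivative_normal_ex[OF x0 xL interval_subset_dom_ex[OF x0 xL s]]] box s
  unfolding ncomp_def tcomp_def by (auto simp: subset_iff)

lemma has_field_derivative_tcomp:
  "((\<lambda>s. tcomp x0 L (F (s, 0)) s) has_real_derivative
      tcomp x0 L (partial_s F (s, 0)) s - curv_ex x0 L s * ncomp x0 L (F (s, 0)) s) (at s)"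
  using has_field_derivative_inner[OF has_vector_derivative_partial_s[OF F U]
      has_vector_derivative_tangent_ex[OF x0 xL interval_subset_dom_ex[OF x0 xL s]]] box s
  unfolding ncomp_def tcomp_def by (auto simp: subset_iff)

lemma has_field_derivative_ncoord: "(ncoord x0 L F has_real_derivative ncoord' x0 L F s) (at s)"
  unfolding ncoord_def[abs_def] ncoord'_def by (rule has_field_derivative_ncomp)

lemma has_field_derivative_tcoord: "(tcoord x0 L F has_real_derivative tcoord' x0 L F s) (at s)"
  unfolding tcoord_def[abs_def] tcoord'_def by (rule has_field_derivative_tcomp)

end

lemma has_field_derivative_ncoord':
  assumes F: "smooth_open U F"
  shows "(ncoord' x0 L F has_real_derivative ncoord'' x0 L F s) (at s)"
proof -
  have "(ncoord' x0 L F has_real_derivative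
     (ncomp x0 L (partial_s (partial_s F) (s, 0)) s + curv_ex x0 L s * tcomp x0 L (partial_s F (s, 0)) s)
     + (curv_ex x0 L s * (tcomp x0 L (partial_s F (s, 0)) s - curv_ex x0 L s * ncomp x0 L (F (s, 0)) s)
        + curv_ex' x0 L s * tcomp x0 L (F (s, 0)) s)) (at s)"
    unfolding ncoord'_def[abs_def]
    by (intro DERIV_add DERIV_mult' has_field_derivative_ncomp[OF smooth_open_partial_s[OF F]]
        has_field_derivative_tcomp[OF F] has_field_derivative_curv_ex[OF x0 xL interval_subset_dom_ex[OF x0 xL s]])
  then show ?thesis unfolding ncoord''_def by (simp add: algebra_simps power2_eq_square)
qed

lemma has_field_derivative_tcoord':
  assumes F: "smooth_open U F"
  shows "(tcoord' x0 L F has_real_derivative tcoord'' x0 L F s) (at s)"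
proof -
  have "(tcoord' x0 L F has_real_derivative
     (tcomp x0 L (partial_s (partial_s F) (s, 0)) s - curv_ex x0 L s * ncomp x0 L (partial_s F (s, 0)) s)
     - (curv_ex x0 L s * (ncomp x0 L (partial_s F (s, 0)) s + curv_ex x0 L s * tcomp x0 L (F (s, 0)) s)
        + curv_ex' x0 L s * ncomp x0 L (F (s, 0)) s)) (at s)"
    unfolding tcoord'_def[abs_def]
    by (intro DERIV_diff DERIV_mult' has_field_derivative_ncomp[OF F]
        has_field_derivative_tcomp[OF smooth_open_partial_s[OF F]]
        has_field_derivative_curv_ex[OF x0 xL interval_subset_dom_ex[OF x0 xL s]])
  then show ?thesis unfolding tcoord''_def by (simp add: algebra_simps power2_eq_square)
qed

end

end

section \<open>Variations of the explicit curve\<close>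

text \<open>Writing \<open>h = 1 / H\<close>, the frame coordinates
  of \<open>\<partial>\<^sub>t g\<close> and \<open>\<partial>\<^sub>t\<^sub>t g\<close> and their \<open>s\<close>-derivatives as independent variables, the second
  \<open>t\<close>-derivative of the energy density equals the quadratic density plus \<open>\<lambda>\<close> times the linear
  density plus an exact derivative; only the ODE \<open>2 h'\<^sup>2 + 2 h h'' = \<lambda> - 2\<close> is used.\<close>

lemma energy_tt_frame_identity:
  fixes h h1 h2 lam xN xT xsN xsT xssN xssT yN yT ysN ysT yssN :: real
  assumes h: "h \<noteq> 0" and ode: "2 * h1\<^sup>2 + 2 * h * h2 = lam - 2"
  defines "H \<equiv> 1 / h" and "Hp \<equiv> - h1 / h\<^sup>2"
  defines "ph \<equiv> xN" and "ph1 \<equiv> xsN + H * xT" and "ph2 \<equiv> xssN + 2 * H * xsT + Hp * xT - H\<^sup>2 * xN"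
      and "ta \<equiv> xT" and "ta1 \<equiv> xsT - H * xN" and "ta2 \<equiv> xssT - 2 * H * xsN - Hp * xN - H\<^sup>2 * xT"
      and "ps \<equiv> yN" and "ps1 \<equiv> ysN + H * yT" and "ps2 \<equiv> yssN + 2 * H * ysT + Hp * yT - H\<^sup>2 * yN"
      and "pt \<equiv> yT" and "pt1 \<equiv> ysT - H * yN"
  shows "sq_div'' 1 (2 * xsT) (2 * (xsN\<^sup>2 + xsT\<^sup>2) + 2 * ysT) H (H * xsT - xssN)
      (H * ysT + 2 * (xsN * xssT - xsT * xssN) - yssN)
    = (2 * H * ph\<^sup>2 - 2 * ph1\<^sup>2 / H + 2 * ph2\<^sup>2 / H ^ 3) + lam * (ps + H * ta\<^sup>2 + 2 * ph * ta1)
      + (2 * (ta1\<^sup>2 * h + ta * ta2 * h + ta * ta1 * h1) - 2 * (2 * ta * ta1 * h1 + ta\<^sup>2 * h2)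
         - 2 * (ph2 * ta1 * h\<^sup>2 + ph1 * ta2 * h\<^sup>2 + 2 * ph1 * ta1 * h * h1)
         + 4 * (ph2 * ta * h * h1 + ph1 * ta1 * h * h1 + ph1 * ta * h1\<^sup>2 + ph1 * ta * h * h2)
         + 2 * (1 - lam) * (ph1 * ta + ph * ta1) + 2 * (ph1\<^sup>2 * h + ph * ph2 * h + ph * ph1 * h1))
      + (pt1 * h + pt * h1 + ps2 * h\<^sup>2 + 2 * ps1 * h * h1 - 2 * (ps1 * h * h1 + ps * h1\<^sup>2 + ps * h * h2))"
proof -
  have lam: "lam = 2 * h1\<^sup>2 + 2 * h * h2 + 2" using ode by simp
  show ?thesis
    unfolding sq_div''_def H_def Hp_def ph_def ph1_def ph2_def ta_def ta1_def ta2_def ps_def ps1_def ps2_def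
      pt_def pt1_def lam
    using h by (simp add: field_simps power2_eq_square power3_eq_cube)
qed

text \<open>The three terms of that identity along a variation with smooth extension \<open>g\<close>;
  \<open>boundary_potential'\<close> is the \<open>s\<close>-derivative of \<open>boundary_potential\<close>.\<close>

definition quadratic_density :: "real \<Rightarrow> real \<Rightarrow> (real \<times> real \<Rightarrow> real \<times> real) \<Rightarrow> real \<Rightarrow> real" where
  "quadratic_density x0 L g s = 2 * curv_ex x0 L s * (ncoord x0 L (partial_t g) s)\<^sup>2
     - 2 * (ncoord' x0 L (partial_t g) s)\<^sup>2 / curv_ex x0 L s + 2 * (ncoord'' x0 L (partial_t g) s)\<^sup>2 / curv_ex x0 L s ^ 3"

definition linear_density :: "real \<Rightarrow> real \<Rightarrow> (real \<times> real \<Rightarrow> real \<times> real) \<Rightarrow> real \<Rightarrow> real" where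
  "linear_density x0 L g s = ncoord x0 L (partial_t (partial_t g)) s + curv_ex x0 L s * (tcoord x0 L (partial_t g) s)\<^sup>2
     + 2 * ncoord x0 L (partial_t g) s * tcoord' x0 L (partial_t g) s"

definition boundary_potential :: "real \<Rightarrow> real \<Rightarrow> (real \<times> real \<Rightarrow> real \<times> real) \<Rightarrow> real \<Rightarrow> real" where
  "boundary_potential x0 L g s =
    (let h = radius_ex x0 L s; h1 = radius_ex' x0 L s; lam = lambda_ex x0 L;
       ph = ncoord x0 L (partial_t g) s; ph1 = ncoord' x0 L (partial_t g) s;
       ta = tcoord x0 L (partial_t g) s; ta1 = tcoord' x0 L (partial_t g) s;
       ps = ncoord x0 L (partial_t (partial_t g)) s; ps1 = ncoord' x0 L (partial_t (partial_t g)) s;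
       pt = tcoord x0 L (partial_t (partial_t g)) s in
     2 * ta * ta1 * h - 2 * ta\<^sup>2 * h1 - 2 * ph1 * ta1 * h\<^sup>2 + 4 * ph1 * ta * h * h1 + 2 * ph * ta * (1 - lam)
     + 2 * ph * ph1 * h + pt * h + ps1 * h\<^sup>2 - 2 * ps * h * h1)"

definition boundary_potential' :: "real \<Rightarrow> real \<Rightarrow> (real \<times> real \<Rightarrow> real \<times> real) \<Rightarrow> real \<Rightarrow> real" where
  "boundary_potential' x0 L g s =
    (let h = radius_ex x0 L s; h1 = radius_ex' x0 L s; h2 = radius_ex'' x0 L s; lam = lambda_ex x0 L;
       ph = ncoord x0 L (partial_t g) s; ph1 = ncoord' x0 L (partial_t g) s; ph2 = ncoord'' x0 L (partial_t g) s;
       ta = tcoord x0 L (partial_t g) s; ta1 = tcoord' x0 L (partial_t g) s; ta2 = tcoord'' x0 L (partial_t g) s;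
       ps = ncoord x0 L (partial_t (partial_t g)) s; ps1 = ncoord' x0 L (partial_t (partial_t g)) s;
       ps2 = ncoord'' x0 L (partial_t (partial_t g)) s;
       pt = tcoord x0 L (partial_t (partial_t g)) s; pt1 = tcoord' x0 L (partial_t (partial_t g)) s in
     (2 * (ta1\<^sup>2 * h + ta * ta2 * h + ta * ta1 * h1) - 2 * (2 * ta * ta1 * h1 + ta\<^sup>2 * h2)
      - 2 * (ph2 * ta1 * h\<^sup>2 + ph1 * ta2 * h\<^sup>2 + 2 * ph1 * ta1 * h * h1)
      + 4 * (ph2 * ta * h * h1 + ph1 * ta1 * h * h1 + ph1 * ta * h1\<^sup>2 + ph1 * ta * h * h2)
      + 2 * (1 - lam) * (ph1 * ta + ph * ta1) + 2 * (ph1\<^sup>2 * h + ph * ph2 * h + ph * ph1 * h1))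
     + (pt1 * h + pt * h1 + ps2 * h\<^sup>2 + 2 * ps1 * h * h1 - 2 * (ps1 * h * h1 + ps * h1\<^sup>2 + ps * h * h2)))"

locale smooth_variation =
  fixes x0 L ta tb :: real and U :: "(real \<times> real) set" and g :: "real \<times> real \<Rightarrow> real \<times> real"
    and V :: "real \<Rightarrow> real \<Rightarrow> real \<times> real"
  assumes x0: "0 < x0" and xL: "3 * x0 < L"
    and ta: "ta \<le> 0" and tb: "0 \<le> tb" and tab: "ta < tb"
    and U: "open U" and g: "smooth_open U g" and box: "{0..2*L} \<times> {ta..tb} \<subseteq> U"
    and V_eq: "\<And>s t. s \<in> {0..2*L} \<Longrightarrow> t \<in> {ta..tb} \<Longrightarrow> V s t = g (s, t)"
    and V_0: "\<And>s. s \<in> {0..2*L} \<Longrightarrow> V s 0 = gamma_ex x0 L s"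
    and V_admissible: "\<And>t. t \<in> {ta..tb} \<Longrightarrow> admissible x0 L (\<lambda>s. V s t)"
begin

lemma two_L_pos: "0 < 2 * L"
  using L_pos[OF x0 xL] by simp

lemma zero_in_T: "0 \<in> {ta..tb}"
  using ta tb by simp

lemma box_in_U: "s \<in> {0..2*L} \<Longrightarrow> t \<in> {ta..tb} \<Longrightarrow> (s, t) \<in> U"
  using box by auto

lemma in_dom_ex: "s \<in> {0..2*L} \<Longrightarrow> s \<in> dom_ex x0 L"
  using interval_subset_dom_ex[OF x0 xL] .

lemma box_0_in_U: "{0..2*L} \<times> {0} \<subseteq> U"
  using box_in_U zero_in_T by auto

lemmas partial_t_partial_s_swap_at_0 = partial_t_partial_s_swap[OF g U box_in_U[OF _ zero_in_T]]

lemma dv_slice: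
  assumes "s \<in> {0..2*L}" "t \<in> {ta..tb}"
  shows "dv {0..2*L} (\<lambda>s. V s t) s = partial_s g (s, t)"
    and "dv {0..2*L} (dv {0..2*L} (\<lambda>s. V s t)) s = partial_s (partial_s g) (s, t)"
proof -
  have d1: "dv {0..2*L} (\<lambda>s. V s t) s' = partial_s g (s', t)" if "s' \<in> {0..2*L}" for s'
    by (rule dv_eqI[OF two_L_pos that]) (use V_eq assms(2) in simp,
        rule has_vector_derivative_partial_s[OF g U box_in_U[OF that assms(2)]])
  show "dv {0..2*L} (\<lambda>s. V s t) s = partial_s g (s, t)" using d1 assms(1) .
  show "dv {0..2*L} (dv {0..2*L} (\<lambda>s. V s t)) s = partial_s (partial_s g) (s, t)"
    by (rule dv_eqI[OF two_L_pos assms(1)]) (use d1 in simp,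
        rule has_vector_derivative_partial_s[OF smooth_open_partial_s[OF g] U box_in_U[OF assms]])
qed

lemma partial_s_at_0:
  assumes s: "s \<in> {0..2*L}"
  shows "partial_s g (s, 0) = tangent_ex x0 L s"
    and "partial_s (partial_s g) (s, 0) = (- curv_ex x0 L s) *\<^sub>R normal_ex x0 L s"
proof -
  have d1: "dv {0..2*L} (\<lambda>s. V s 0) y = tangent_ex x0 L y" if "y \<in> {0..2*L}" for y
    by (rule dv_eqI[OF two_L_pos that]) (use V_0 in simp, rule has_vector_derivative_at_within,
        rule has_vector_derivative_gamma_ex[OF x0 xL in_dom_ex[OF that]])
  show "partial_s g (s, 0) = tangent_ex x0 L s"
    using d1[OF s] dv_slice(1)[OF s zero_in_T] by simp
  have "dv {0..2*L} (dv {0..2*L} (\<lambda>s. V s 0)) s = (- curv_ex x0 L s) *\<^sub>R normal_ex x0 L s"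
    by (rule dv_eqI[OF two_L_pos s]) (use d1 in simp, rule has_vector_derivative_at_within,
        rule has_vector_derivative_tangent_ex[OF x0 xL in_dom_ex[OF s]])
  then show "partial_s (partial_s g) (s, 0) = (- curv_ex x0 L s) *\<^sub>R normal_ex x0 L s"
    using dv_slice(2)[OF s zero_in_T] by simp
qed

lemma turning_pos:
  assumes "s \<in> {0..2*L}" "t \<in> {ta..tb}"
  shows "0 < turning g s t" and "partial_s g (s, t) \<noteq> 0"
    and "curv L (\<lambda>s. V s t) s = turning g s t / norm (partial_s g (s, t)) ^ 3"
proof -
  have a: "admissible x0 L (\<lambda>s. V s t)" using V_admissible assms(2) .
  show n: "partial_s g (s, t) \<noteq> 0"
    using a assms(1) dv_slice(1)[OF assms] unfolding admissible_def by auto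
  show c: "curv L (\<lambda>s. V s t) s = turning g s t / norm (partial_s g (s, t)) ^ 3"
    unfolding curv_def dv_slice[OF assms] turning_def inner_perp ..
  have "curv L (\<lambda>s. V s t) s > 0" using a assms(1) unfolding admissible_def by auto
  with n show "0 < turning g s t" unfolding c by (simp add: zero_less_divide_iff)
qed

lemma Fen_eq_integral_energy:
  assumes t: "t \<in> {ta..tb}"
  shows "Fen L (\<lambda>s. V s t) = integral {0..2*L} (\<lambda>s. energy g s t)"
  unfolding Fen_def
proof (rule integral_cong)
  fix s assume s: "s \<in> {0..2*L}"
  have "speed_sq g s t = (norm (partial_s g (s, t)))\<^sup>2"
    unfolding speed_sq_def by (simp add: power2_norm_eq_inner)
  then show "norm (dv {0..2*L} (\<lambda>s. V s t) s) / curv L (\<lambda>s. V s t) s = energy g s t"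
    using turning_pos(1,2)[OF s t] unfolding turning_pos(3)[OF s t] dv_slice(1)[OF s t] energy_def sq_div_def
    by (simp add: field_simps power2_eq_square power3_eq_cube)
qed

lemma turning_nonzero: "s \<in> {0..2*L} \<Longrightarrow> t \<in> {ta..tb} \<Longrightarrow> turning g s t \<noteq> 0"
  using turning_pos(1) by fastforce

lemmas continuous_on_energy_box = continuous_on_energy[OF g U box turning_nonzero]

lemma has_field_derivative_Fen:
  assumes t: "t \<in> {ta..tb}"
  shows "((\<lambda>t. Fen L (\<lambda>s. V s t)) has_real_derivative integral {0..2*L} (\<lambda>s. energy_t g s t))
    (at t within {ta..tb})"
proof -
  have "((\<lambda>t. integral {0..2*L} (\<lambda>s. energy g s t)) has_real_derivative integral {0..2*L} (\<lambda>s. energy_t g s t))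
      (at t within {ta..tb})"
    by (rule has_field_derivative_integral_parametric[OF convex_real_interval(5) t
          has_field_derivative_energy[OF g U box_in_U turning_nonzero] continuous_on_energy_box(1,2)])
  then show ?thesis
    by (rule has_field_derivative_transform_within[OF _ zero_less_one t]) (use Fen_eq_integral_energy in simp)
qed

lemma has_field_derivative_integral_energy_t:
  "((\<lambda>t. integral {0..2*L} (\<lambda>s. energy_t g s t)) has_real_derivative integral {0..2*L} (\<lambda>s. energy_tt g s 0))
    (at 0 within {ta..tb})"
  by (rule has_field_derivative_integral_parametric[OF convex_real_interval(5) zero_in_T
        has_field_derivative_energy_t[OF g U box_in_U turning_nonzero] continuous_on_energy_box(2,3)])

lemma dv_time_slice:
  assumes "s \<in> {0..2*L}" "t \<in> {ta..tb}"
  shows "dv {ta..tb} (\<lambda>t. V s t) t = partial_t g (s, t)"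
  by (rule dv_eqI[OF tab assms(2)]) (use V_eq assms in simp,
      rule has_vector_derivative_partial_t[OF g U box_in_U[OF assms]])

lemma velocity_accel_eq:
  assumes s: "s \<in> {0..2*L}"
  shows "velocity {ta..tb} V s = partial_t g (s, 0)"
    and "accel {ta..tb} V s = partial_t (partial_t g) (s, 0)"
proof -
  show "velocity {ta..tb} V s = partial_t g (s, 0)"
    using dv_time_slice[OF s zero_in_T] unfolding velocity_def .
  show "accel {ta..tb} V s = partial_t (partial_t g) (s, 0)"
    unfolding accel_def
    by (rule dv_eqI[OF tab zero_in_T]) (use dv_time_slice s in simp,
        rule has_vector_derivative_partial_t[OF smooth_open_partial_t[OF g] U box_in_U[OF s zero_in_T]])
qed

text \<open>Admissibility pins the endpoints, so the variation field and its acceleration vanish there.\<close>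

lemma velocity_accel_endpoints:
  assumes "s = 0 \<or> s = 2*L"
  shows "partial_t g (s, 0) = 0" and "partial_t (partial_t g) (s, 0) = 0"
proof -
  have s: "s \<in> {0..2*L}" using assms two_L_pos by auto
  have const: "V s t = V s 0" if "t \<in> {ta..tb}" for t
    using V_admissible[OF that] V_admissible[OF zero_in_T] assms unfolding admissible_def by auto
  have z: "dv {ta..tb} (\<lambda>t. V s t) y = 0" if "y \<in> {ta..tb}" for y
    by (rule dv_eqI[OF tab that, where F="\<lambda>_. V s 0"]) (use const in auto)
  show "partial_t g (s, 0) = 0" using z[OF zero_in_T] dv_time_slice[OF s zero_in_T] by simp
  have "dv {ta..tb} (dv {ta..tb} (\<lambda>t. V s t)) 0 = 0"
    by (rule dv_eqI[OF tab zero_in_T, where F="\<lambda>_. 0"]) (use z in auto)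
  then show "partial_t (partial_t g) (s, 0) = 0"
    using velocity_accel_eq(2)[OF s] unfolding accel_def by simp
qed

text \<open>At \<open>t = 0\<close> the slice is \<open>\<gamma>\<close> itself (unit speed, \<open>\<gamma>'' = -H N\<close>) and the mixed partials can be
  reordered, so every ingredient of \<open>energy_tt\<close> becomes a frame coordinate of an \<open>s\<close>-derivative
  of \<open>X = \<partial>\<^sub>t g\<close> or \<open>Y = \<partial>\<^sub>t\<^sub>t g\<close>.\<close>

lemma energy_tt_at_0:
  assumes s: "s \<in> {0..2*L}"
  defines "X \<equiv> partial_t g" and "Y \<equiv> partial_t (partial_t g)"
  shows "energy_tt g s 0 = sq_div'' 1 (2 * tcomp x0 L (partial_s X (s, 0)) s)
     (2 * ((ncomp x0 L (partial_s X (s, 0)) s)\<^sup>2 + (tcomp x0 L (partial_s X (s, 0)) s)\<^sup>2)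
      + 2 * tcomp x0 L (partial_s Y (s, 0)) s)
     (curv_ex x0 L s) (curv_ex x0 L s * tcomp x0 L (partial_s X (s, 0)) s - ncomp x0 L (partial_s (partial_s X) (s, 0)) s)
     (curv_ex x0 L s * tcomp x0 L (partial_s Y (s, 0)) s
      + 2 * (ncomp x0 L (partial_s X (s, 0)) s * tcomp x0 L (partial_s (partial_s X) (s, 0)) s
        - tcomp x0 L (partial_s X (s, 0)) s * ncomp x0 L (partial_s (partial_s X) (s, 0)) s)
      - ncomp x0 L (partial_s (partial_s Y) (s, 0)) s)"
proof -
  note inner_frame = frame_ex(5)[of _ _ x0 L s] and cross2_frame = frame_ex(6)[of _ _ x0 L s]
  have "speed_sq g s 0 = 1"
    "speed_sq_t g s 0 = 2 * tcomp x0 L (partial_s X (s, 0)) s"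
    "speed_sq_tt g s 0 = 2 * ((ncomp x0 L (partial_s X (s, 0)) s)\<^sup>2 + (tcomp x0 L (partial_s X (s, 0)) s)\<^sup>2)
      + 2 * tcomp x0 L (partial_s Y (s, 0)) s"
    "turning g s 0 = curv_ex x0 L s"
    "turning_t g s 0 = curv_ex x0 L s * tcomp x0 L (partial_s X (s, 0)) s
      - ncomp x0 L (partial_s (partial_s X) (s, 0)) s"
    "turning_tt g s 0 = curv_ex x0 L s * tcomp x0 L (partial_s Y (s, 0)) s
      + 2 * (ncomp x0 L (partial_s X (s, 0)) s * tcomp x0 L (partial_s (partial_s X) (s, 0)) s
        - tcomp x0 L (partial_s X (s, 0)) s * ncomp x0 L (partial_s (partial_s X) (s, 0)) s)
      - ncomp x0 L (partial_s (partial_s Y) (s, 0)) s"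
    unfolding speed_sq_def speed_sq_t_def speed_sq_tt_def turning_def turning_t_def turning_tt_def
      partial_s_at_0[OF s] partial_t_partial_s_swap_at_0[OF s] X_def Y_def
    by (simp_all only: inner_frame cross2_frame frame_ex(1-4) ncomp_scaleR tcomp_scaleR)
      (simp_all add: algebra_simps power2_eq_square)
  then show ?thesis unfolding energy_tt_def by simp
qed

lemma energy_tt_at_0_decomposition:
  assumes s: "s \<in> {0..2*L}"
  shows "energy_tt g s 0
    = quadratic_density x0 L g s + lambda_ex x0 L * linear_density x0 L g s + boundary_potential' x0 L g s"
proof -
  note dom = in_dom_ex[OF s]
  have h: "radius_ex x0 L s \<noteq> 0" using radius_ex_pos[OF x0 xL dom] by simp
  note identity = energy_tt_frame_identity[OF h radius_ex_ode[OF x0 xL dom],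
     where xN = "ncomp x0 L (partial_t g (s, 0)) s" and xT = "tcomp x0 L (partial_t g (s, 0)) s"
       and xsN = "ncomp x0 L (partial_s (partial_t g) (s, 0)) s"
       and xsT = "tcomp x0 L (partial_s (partial_t g) (s, 0)) s"
       and xssN = "ncomp x0 L (partial_s (partial_s (partial_t g)) (s, 0)) s"
       and xssT = "tcomp x0 L (partial_s (partial_s (partial_t g)) (s, 0)) s"
       and yN = "ncomp x0 L (partial_t (partial_t g) (s, 0)) s" and yT = "tcomp x0 L (partial_t (partial_t g) (s, 0)) s"
       and ysN = "ncomp x0 L (partial_s (partial_t (partial_t g)) (s, 0)) s"
       and ysT = "tcomp x0 L (partial_s (partial_t (partial_t g)) (s, 0)) s"
       and yssN = "ncomp x0 L (partial_s (partial_s (partial_t (partial_t g))) (s, 0)) s"]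
  show ?thesis
    unfolding energy_tt_at_0[OF s] quadratic_density_def linear_density_def boundary_potential'_def Let_def
      ncoord_def ncoord'_def ncoord''_def tcoord_def tcoord'_def tcoord''_def curv_ex'_def curv_ex_def
      add.assoc[symmetric]
    using identity[unfolded add.assoc[symmetric]] .
qed

lemma has_field_derivative_boundary_potential:
  assumes s: "s \<in> {0..2*L}"
  shows "(boundary_potential x0 L g has_real_derivative boundary_potential' x0 L g s) (at s)"
proof -
  note dom = in_dom_ex[OF s]
  note X = smooth_open_partial_t[OF g] and Y = smooth_open_partial_t[OF smooth_open_partial_t[OF g]]
  note frame = x0 xL U box_0_in_U s
  note d = has_field_derivative_ncoord[OF frame X] has_field_derivative_ncoord'[OF frame X]
    has_field_derivative_tcoord[OF frame X] has_field_derivative_tcoord'[OF frame X]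
    has_field_derivative_ncoord[OF frame Y] has_field_derivative_ncoord'[OF frame Y] has_field_derivative_tcoord[OF frame Y]
    has_field_derivative_radius_ex[OF x0 xL dom] has_field_derivative_radius_ex'[OF x0 xL dom]
  show ?thesis
    unfolding boundary_potential_def[abs_def] boundary_potential'_def Let_def
    apply (rule DERIV_cong)
     apply (rule derivative_eq_intros d refl | simp only:)+
    apply (simp add: algebra_simps power2_eq_square)
    done
qed

lemma continuous_on_linear_density: "continuous_on {0..2*L} (linear_density x0 L g)"
proof -
  note X = smooth_open_partial_t[OF g] and Y = smooth_open_partial_t[OF smooth_open_partial_t[OF g]]
  note frame = x0 xL U box_0_in_U
  have cont: "continuous_on {0..2*L} f" if "\<And>s. s \<in> {0..2*L} \<Longrightarrow> (f has_real_derivative f' s) (at s)" for f f'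
    using that by (meson DERIV_isCont continuous_at_imp_continuous_on)
  show ?thesis unfolding linear_density_def[abs_def]
    by (intro continuous_intros cont[OF has_field_derivative_ncoord[OF frame _ X]] cont[OF has_field_derivative_ncoord[OF frame _ Y]]
        cont[OF has_field_derivative_tcoord[OF frame _ X]] cont[OF has_field_derivative_tcoord'[OF frame _ X]]
        cont[OF has_field_derivative_curv_ex[OF x0 xL in_dom_ex]])
qed

lemma integral_energy_tt_0:
  "integral {0..2*L} (\<lambda>s. energy_tt g s 0)
    = integral {0..2*L} (quadratic_density x0 L g) + lambda_ex x0 L * integral {0..2*L} (linear_density x0 L g)
      + (boundary_potential x0 L g (2*L) - boundary_potential x0 L g 0)"
proof -
  define IK IB where "IK = integral {0..2*L} (\<lambda>s. energy_tt g s 0)" and "IB = integral {0..2*L} (linear_density x0 L g)"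
  define P where "P = boundary_potential x0 L g (2*L) - boundary_potential x0 L g 0"
  have "continuous_on {0..2*L} (\<lambda>s. (\<lambda>p. energy_tt g (snd p) (fst p)) (0, s))"
    by (rule continuous_on_compose2[OF continuous_on_energy_box(3)])
      (use zero_in_T in \<open>auto intro!: continuous_intros\<close>)
  then have "((\<lambda>s. energy_tt g s 0) has_integral IK) {0..2*L}"
    unfolding IK_def by (simp add: integrable_integral integrable_continuous_real)
  moreover have "(linear_density x0 L g has_integral IB) {0..2*L}"
    unfolding IB_def using integrable_continuous_real[OF continuous_on_linear_density]
    by (simp add: integrable_integral)
  moreover have "(boundary_potential' x0 L g has_integral P) {0..2*L}"
    unfolding P_def using two_L_pos has_field_derivative_boundary_potential
    by (intro fundamental_theorem_of_calculus) (auto intro: has_vector_derivative_at_within_real)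
  ultimately have "((\<lambda>s. energy_tt g s 0 - lambda_ex x0 L * linear_density x0 L g s - boundary_potential' x0 L g s)
      has_integral (IK - lambda_ex x0 L * IB - P)) {0..2*L}"
    by (intro has_integral_diff has_integral_mult_right)
  then have "(quadratic_density x0 L g has_integral (IK - lambda_ex x0 L * IB - P)) {0..2*L}"
    by (rule has_integral_eq[rotated]) (simp add: energy_tt_at_0_decomposition)
  then show ?thesis unfolding IK_def[symmetric] IB_def[symmetric] P_def[symmetric]
    by (simp add: integral_unique)
qed

lemma boundary_potential_endpoint:
  assumes "s = 0 \<or> s = 2*L"
  shows "boundary_potential x0 L g s
    = (ncoord' x0 L (partial_t (partial_t g)) s - 2 * ncoord' x0 L (partial_t g) s * tcoord' x0 L (partial_t g) s)
      * (radius_ex x0 L s)\<^sup>2"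
proof -
  have "ncoord x0 L (partial_t g) s = 0" "tcoord x0 L (partial_t g) s = 0"
    "ncoord x0 L (partial_t (partial_t g)) s = 0" "tcoord x0 L (partial_t (partial_t g)) s = 0"
    unfolding ncoord_def tcoord_def ncomp_def tcomp_def velocity_accel_endpoints[OF assms] by simp_all
  then show ?thesis unfolding boundary_potential_def Let_def by (simp add: algebra_simps)
qed

end

locale decomposed_variation = smooth_variation +
  fixes \<phi> \<phi>\<tau> \<psi> \<psi>\<tau> :: "real \<Rightarrow> real"
  assumes velocity_decomp: "\<forall>s\<in>{0..2*L}. velocity {ta..tb} V s
      = \<phi> s *\<^sub>R normal L (gamma_ex x0 L) s + \<phi>\<tau> s *\<^sub>R dv {0..2*L} (gamma_ex x0 L) s"
    and accel_decomp: "\<forall>s\<in>{0..2*L}. accel {ta..tb} V s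
      = \<psi> s *\<^sub>R normal L (gamma_ex x0 L) s + \<psi>\<tau> s *\<^sub>R dv {0..2*L} (gamma_ex x0 L) s"
begin

lemma coordinates_eq:
  assumes s: "s \<in> {0..2*L}"
  shows "\<phi> s = ncoord x0 L (partial_t g) s" "\<phi>\<tau> s = tcoord x0 L (partial_t g) s"
    and "\<psi> s = ncoord x0 L (partial_t (partial_t g)) s"
proof -
  note gamma = normal_gamma_ex[OF x0 xL s] dv_gamma_ex(1)[OF x0 xL s]
  have "partial_t g (s, 0) = \<phi> s *\<^sub>R normal_ex x0 L s + \<phi>\<tau> s *\<^sub>R tangent_ex x0 L s"
    and "partial_t (partial_t g) (s, 0) = \<psi> s *\<^sub>R normal_ex x0 L s + \<psi>\<tau> s *\<^sub>R tangent_ex x0 L s"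
    using velocity_decomp accel_decomp s velocity_accel_eq[OF s] gamma by auto
  then show "\<phi> s = ncoord x0 L (partial_t g) s" "\<phi>\<tau> s = tcoord x0 L (partial_t g) s"
    "\<psi> s = ncoord x0 L (partial_t (partial_t g)) s"
    unfolding ncoord_def tcoord_def by (simp_all add: ncomp_add tcomp_add ncomp_scaleR tcomp_scaleR frame_ex)
qed

lemma dv_coordinates:
  assumes s: "s \<in> {0..2*L}"
  shows "dv {0..2*L} \<phi> s = ncoord' x0 L (partial_t g) s"
    and "dv {0..2*L} (dv {0..2*L} \<phi>) s = ncoord'' x0 L (partial_t g) s"
    and "dv {0..2*L} \<phi>\<tau> s = tcoord' x0 L (partial_t g) s"
    and "dv {0..2*L} \<psi> s = ncoord' x0 L (partial_t (partial_t g)) s"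
proof -
  note X = smooth_open_partial_t[OF g] and Y = smooth_open_partial_t[OF smooth_open_partial_t[OF g]]
  note frame = x0 xL U box_0_in_U
  have dv_phi: "dv {0..2*L} \<phi> y = ncoord' x0 L (partial_t g) y" if y: "y \<in> {0..2*L}" for y
    by (rule dv_eqI[OF two_L_pos y]) (use coordinates_eq in simp,
        rule has_vector_derivative_at_within_real, rule has_field_derivative_ncoord[OF frame y X])
  show "dv {0..2*L} \<phi> s = ncoord' x0 L (partial_t g) s" using dv_phi[OF s] .
  show "dv {0..2*L} (dv {0..2*L} \<phi>) s = ncoord'' x0 L (partial_t g) s"
    by (rule dv_eqI[OF two_L_pos s]) (use dv_phi in simp,
        rule has_vector_derivative_at_within_real, rule has_field_derivative_ncoord'[OF frame s X])
  show "dv {0..2*L} \<phi>\<tau> s = tcoord' x0 L (partial_t g) s"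
    by (rule dv_eqI[OF two_L_pos s]) (use coordinates_eq in simp,
        rule has_vector_derivative_at_within_real, rule has_field_derivative_tcoord[OF frame s X])
  show "dv {0..2*L} \<psi> s = ncoord' x0 L (partial_t (partial_t g)) s"
    by (rule dv_eqI[OF two_L_pos s]) (use coordinates_eq in simp,
        rule has_vector_derivative_at_within_real, rule has_field_derivative_ncoord[OF frame s Y])
qed

lemma Qform_eq:
  "Qform x0 L \<phi> \<phi>\<tau> \<psi>
    = integral {0..2*L} (quadratic_density x0 L g) + lambda_ex x0 L * integral {0..2*L} (linear_density x0 L g)"
proof -
  note eqs = curv_gamma_ex[OF x0 xL] coordinates_eq dv_coordinates
  have "integral {0..2*L} (\<lambda>s. 2 * curv L (gamma_ex x0 L) s * (\<phi> s)\<^sup>2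
        - 2 * (dv {0..2*L} \<phi> s)\<^sup>2 / curv L (gamma_ex x0 L) s
        + 2 * (dv {0..2*L} (dv {0..2*L} \<phi>) s)\<^sup>2 / curv L (gamma_ex x0 L) s ^ 3)
      = integral {0..2*L} (quadratic_density x0 L g)"
    by (rule integral_cong) (simp add: quadratic_density_def eqs)
  moreover have "integral {0..2*L} (\<lambda>s. \<psi> s + curv L (gamma_ex x0 L) s * (\<phi>\<tau> s)\<^sup>2 + 2 * \<phi> s * dv {0..2*L} \<phi>\<tau> s)
      = integral {0..2*L} (linear_density x0 L g)"
    by (rule integral_cong) (simp add: linear_density_def eqs)
  ultimately show ?thesis unfolding Qform_def Let_def by simp
qed

lemma boundary_term_eq:
  assumes "s = 0 \<or> s = 2*L"
  shows "(dv {0..2*L} \<psi> s - 2 * dv {0..2*L} \<phi> s * dv {0..2*L} \<phi>\<tau> s) / (curv L (gamma_ex x0 L) s)\<^sup>2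
    = boundary_potential x0 L g s"
proof -
  have s: "s \<in> {0..2*L}" using assms two_L_pos by auto
  have "radius_ex x0 L s \<noteq> 0" using radius_ex_pos[OF x0 xL in_dom_ex[OF s]] by simp
  then show ?thesis
    unfolding boundary_potential_endpoint[OF assms] dv_coordinates[OF s] curv_gamma_ex[OF x0 xL s] curv_ex_def
    by (simp add: field_simps)
qed

theorem second_variation:
  "((\<lambda>t. integral {0..2*L} (\<lambda>s. energy_t g s t)) has_real_derivative
      Qform x0 L \<phi> \<phi>\<tau> \<psi>
      + ((dv {0..2*L} \<psi> (2*L) - 2 * dv {0..2*L} \<phi> (2*L) * dv {0..2*L} \<phi>\<tau> (2*L)) / (curv L (gamma_ex x0 L) (2*L))\<^sup>2
        - (dv {0..2*L} \<psi> 0 - 2 * dv {0..2*L} \<phi> 0 * dv {0..2*L} \<phi>\<tau> 0) / (curv L (gamma_ex x0 L) 0)\<^sup>2))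
    (at 0 within {ta..tb})"
  unfolding boundary_term_eq[of 0, simplified] boundary_term_eq[of "2*L", simplified] Qform_eq
  using has_field_derivative_integral_energy_t integral_energy_tt_0 by simp

end
section \<open>Endpoint conditions for two-sided variations\<close>

lemma local_min_deriv_conditions:
  fixes m m' :: "real \<Rightarrow> real"
  assumes d: "0 < d" and m: "\<And>t. \<bar>t\<bar> < d \<Longrightarrow> (m has_real_derivative m' t) (at t)"
    and m': "(m' has_real_derivative c) (at 0)"
    and min: "\<And>t. \<bar>t\<bar> < d \<Longrightarrow> m 0 \<le> m t"
  shows "m' 0 = 0" and "0 \<le> c"
proof -
  show m'0: "m' 0 = 0"
    by (rule DERIV_local_min[OF m[of 0] d]) (use d min in auto)
  show "0 \<le> c"
  proof (rule ccontr)
    assume "\<not> 0 \<le> c"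
    then obtain e where e: "e > 0" "\<forall>h>0. h < e \<longrightarrow> m' 0 > m' (0 + h)"
      using DERIV_neg_dec_right[OF m'] by force
    define b where "b = min e d / 2"
    have b: "0 < b" "b < e" "b < d" using e d by (auto simp: b_def)
    obtain z where z: "0 < z" "z < b" "m b - m 0 = (b - 0) * m' z"
      using MVT2[of 0 b m m'] b m by force
    have "m' z < 0" using e(2) z b m'0 by force
    then have "b * m' z < 0" using b(1) by (simp add: mult_pos_neg)
    then have "m b < m 0" using z(3) by simp
    moreover have "m 0 \<le> m b" using min b by simp
    ultimately show False by simp
  qed
qed

context smooth_variation
begin

text \<open>Every curve of the variation leaves the \<open>x\<close>-axis upwards at \<open>s = 0\<close> and returns to it
  at \<open>s = 2L\<close>, so the vertical component of its tangent has a sign there; at \<open>t = 0\<close> it vanishes.\<close>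

lemma snd_partial_s_start_nonneg:
  assumes t: "t \<in> {ta..tb}"
  shows "0 \<le> snd (partial_s g (0, t))"
proof (rule ccontr)
  assume "\<not> 0 \<le> snd (partial_s g (0, t))"
  then have neg: "snd (partial_s g (0, t)) < 0" by simp
  have "((\<lambda>s. snd (g (s, t))) has_real_derivative snd (partial_s g (0, t))) (at 0)"
    using has_field_derivative_snd[OF has_vector_derivative_partial_s[OF g U box_in_U[OF _ t]]] two_L_pos by simp
  then obtain e where e: "e > 0" "\<forall>h>0. h < e \<longrightarrow> snd (g (0, t)) > snd (g (0 + h, t))"
    using DERIV_neg_dec_right[OF _ neg] by blast
  define h where "h = min e (2*L) / 2"
  have h: "0 < h" "h < e" "h < 2*L" using e two_L_pos by (auto simp: h_def)
  have a: "admissible x0 L (\<lambda>s. V s t)" using V_admissible t .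
  have "snd (V h t) > 0" using a h unfolding admissible_def by auto
  moreover have "V h t = g (h, t)" using V_eq[OF _ t] h by simp
  moreover have "g (0, t) = V 0 t" using V_eq[OF _ t] two_L_pos by simp
  moreover have "snd (V 0 t) = 0" using a unfolding admissible_def by simp
  ultimately show False using e(2) h by force
qed

lemma snd_partial_s_end_nonpos:
  assumes t: "t \<in> {ta..tb}"
  shows "snd (partial_s g (2*L, t)) \<le> 0"
proof (rule ccontr)
  assume "\<not> snd (partial_s g (2*L, t)) \<le> 0"
  then have pos: "0 < snd (partial_s g (2*L, t))" by simp
  have "((\<lambda>s. snd (g (s, t))) has_real_derivative snd (partial_s g (2*L, t))) (at (2*L))"
    using has_field_derivative_snd[OF has_vector_derivative_partial_s[OF g U box_in_U[OF _ t]]] two_L_pos by simp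
  then obtain e where e: "e > 0" "\<forall>h>0. h < e \<longrightarrow> snd (g (2*L - h, t)) < snd (g (2*L, t))"
    using DERIV_pos_inc_left[OF _ pos] by blast
  define h where "h = min e (2*L) / 2"
  have h: "0 < h" "h < e" "h < 2*L" using e two_L_pos by (auto simp: h_def)
  have a: "admissible x0 L (\<lambda>s. V s t)" using V_admissible t .
  have "snd (V (2*L - h) t) > 0" using a h unfolding admissible_def by auto
  moreover have "V (2*L - h) t = g (2*L - h, t)" using V_eq[OF _ t] h by simp
  moreover have "g (2*L, t) = V (2*L) t" using V_eq[OF _ t] two_L_pos by simp
  moreover have "snd (V (2*L) t) = 0" using a unfolding admissible_def by simp
  ultimately show False using e(2) h by force
qed

lemma endpoint_signs:
  assumes "ta < 0" "0 < tb"
  shows "snd (partial_s (partial_t g) (0, 0)) = 0" "0 \<le> snd (partial_s (partial_t (partial_t g)) (0, 0))"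
    and "snd (partial_s (partial_t g) (2*L, 0)) = 0" "snd (partial_s (partial_t (partial_t g)) (2*L, 0)) \<le> 0"
proof -
  define d where "d = min (- ta) tb"
  have d: "0 < d" and inT: "\<And>t. \<bar>t\<bar> < d \<Longrightarrow> t \<in> {ta..tb}" using assms by (auto simp: d_def)
  have ends: "(0::real) \<in> {0..2*L}" "2*L \<in> {0..2*L}" using two_L_pos by auto
  have horizontal: "snd (partial_s g (s, 0)) = 0" if "s = 0 \<or> s = 2*L" for s
    using that ends partial_s_at_0(1) angle_ex_endpoints[OF x0 xL] by (auto simp: tangent_ex_def)
  have deriv: "((\<lambda>t. c * snd (partial_s g (s, t))) has_real_derivative c * snd (partial_t (partial_s g) (s, t))) (at t)"
    "((\<lambda>t. c * snd (partial_t (partial_s g) (s, t))) has_real_derivative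
        c * snd (partial_t (partial_t (partial_s g)) (s, t))) (at t)"
    if "s \<in> {0..2*L}" "t \<in> {ta..tb}" for s t c
    using g by (auto intro!: DERIV_cmult has_field_derivative_snd has_vector_derivative_partial_t[OF _ U box_in_U[OF that]]
        smooth_open_partial_s smooth_open_partial_t)
  note start = local_min_deriv_conditions[OF d deriv(1)[OF ends(1) inT, where c=1] deriv(2)[OF ends(1) zero_in_T, where c=1]]
  note stop = local_min_deriv_conditions[OF d deriv(1)[OF ends(2) inT, where c="-1"] deriv(2)[OF ends(2) zero_in_T, where c="-1"]]
  note swap = partial_t_partial_s_swap_at_0(1,3)
  show "snd (partial_s (partial_t g) (0, 0)) = 0" "0 \<le> snd (partial_s (partial_t (partial_t g)) (0, 0))"
    using start horizontal snd_partial_s_start_nonneg inT swap[OF ends(1)] by auto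
  show "snd (partial_s (partial_t g) (2*L, 0)) = 0" "snd (partial_s (partial_t (partial_t g)) (2*L, 0)) \<le> 0"
    using stop horizontal snd_partial_s_end_nonpos inT swap[OF ends(2)] by auto
qed

end

context decomposed_variation
begin

text \<open>At the endpoints \<open>X = X' = 0\<close> and \<open>N = (0, -1)\<close>, so \<open>\<phi>'\<close> and \<open>\<psi>'\<close> are minus the vertical
  components of \<open>\<partial>\<^sub>s X\<close> and \<open>\<partial>\<^sub>s X'\<close>.\<close>

lemma endpoint_conditions:
  assumes "ta < 0" "0 < tb"
  shows "dv {0..2*L} \<phi> 0 = 0" "dv {0..2*L} \<phi> (2*L) = 0"
    and "dv {0..2*L} \<psi> 0 \<le> 0" "0 \<le> dv {0..2*L} \<psi> (2*L)"
proof -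
  have ends: "(0::real) \<in> {0..2*L}" "2*L \<in> {0..2*L}" using two_L_pos by auto
  have N: "normal_ex x0 L 0 = (0, -1)" "normal_ex x0 L (2*L) = (0, -1)"
    unfolding normal_ex_def angle_ex_endpoints[OF x0 xL] by auto
  have "dv {0..2*L} \<phi> s = - snd (partial_s (partial_t g) (s, 0))"
    "dv {0..2*L} \<psi> s = - snd (partial_s (partial_t (partial_t g)) (s, 0))" if "s = 0 \<or> s = 2*L" for s
  proof -
    have s: "s \<in> {0..2*L}" using that ends by auto
    have "normal_ex x0 L s = (0, -1)" using that N by auto
    then show "dv {0..2*L} \<phi> s = - snd (partial_s (partial_t g) (s, 0))"
      "dv {0..2*L} \<psi> s = - snd (partial_s (partial_t (partial_t g)) (s, 0))"
      unfolding dv_coordinates(1,4)[OF s] ncoord'_def velocity_accel_endpoints[OF that]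
      by (simp_all add: ncomp_def tcomp_def inner_real_pair)
  qed
  then show "dv {0..2*L} \<phi> 0 = 0" "dv {0..2*L} \<phi> (2*L) = 0"
    "dv {0..2*L} \<psi> 0 \<le> 0" "0 \<le> dv {0..2*L} \<psi> (2*L)"
    using endpoint_signs[OF assms] by auto
qed

end

lemma obtain_smooth_variation:
  assumes "variation x0 L (gamma_ex x0 L) {ta..tb} V" "0 < x0" "3 * x0 < L" "ta \<le> 0" "0 \<le> tb" "ta < tb"
  obtains U g where "smooth_variation x0 L ta tb U g V"
proof -
  obtain U g where "open U" "{0..2*L} \<times> {ta..tb} \<subseteq> U" "smooth_open U g"
    "\<forall>p\<in>{0..2*L} \<times> {ta..tb}. g p = V (fst p) (snd p)"
    using assms(1) unfolding variation_def Cinf_on_def by blast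
  with assms have "smooth_variation x0 L ta tb U g V"
    unfolding variation_def by unfold_locales auto
  then show ?thesis ..
qed

lemma one_sided_second_variation:
  assumes x0: "0 < x0" and xL: "3 * x0 < L"
    and V: "one_sided_admissible_variation x0 L (gamma_ex x0 L) tV V"
    and vel: "\<forall>s\<in>{0..2*L}. velocity {0..tV} V s
      = \<phi> s *\<^sub>R normal L (gamma_ex x0 L) s + \<phi>\<tau> s *\<^sub>R dv {0..2*L} (gamma_ex x0 L) s"
    and acc: "\<forall>s\<in>{0..2*L}. accel {0..tV} V s
      = \<psi> s *\<^sub>R normal L (gamma_ex x0 L) s + \<psi>\<tau> s *\<^sub>R dv {0..2*L} (gamma_ex x0 L) s"
  shows "\<exists>f1. (\<forall>t\<in>{0..tV}. ((\<lambda>t. Fen L (\<lambda>s. V s t)) has_real_derivative f1 t) (at t within {0..tV}))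
    \<and> (f1 has_real_derivative
         Qform x0 L \<phi> \<phi>\<tau> \<psi>
         + ((dv {0..2*L} \<psi> (2*L) - 2 * dv {0..2*L} \<phi> (2*L) * dv {0..2*L} \<phi>\<tau> (2*L)) / (curv L (gamma_ex x0 L) (2*L))\<^sup>2
           - (dv {0..2*L} \<psi> 0 - 2 * dv {0..2*L} \<phi> 0 * dv {0..2*L} \<phi>\<tau> 0) / (curv L (gamma_ex x0 L) 0)\<^sup>2))
       (at 0 within {0..tV})"
proof -
  have tV: "0 < tV" and var: "variation x0 L (gamma_ex x0 L) {0..tV} V"
    using V unfolding one_sided_admissible_variation_def by auto
  obtain U g where "smooth_variation x0 L 0 tV U g V"
    using obtain_smooth_variation[OF var x0 xL] tV by auto
  then interpret decomposed_variation x0 L 0 tV U g V \<phi> \<phi>\<tau> \<psi> \<psi>\<tau>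
    using vel acc unfolding decomposed_variation_def decomposed_variation_axioms_def by blast
  show ?thesis
    by (rule exI[where x="\<lambda>t. integral {0..2*L} (\<lambda>s. energy_t g s t)"], rule conjI)
      (use has_field_derivative_Fen in blast, rule second_variation)
qed

lemma two_sided_second_variation:
  assumes x0: "0 < x0" and xL: "3 * x0 < L"
    and V: "admissible_variation x0 L (gamma_ex x0 L) tV V"
    and vel: "\<forall>s\<in>{0..2*L}. velocity {-tV..tV} V s
      = \<phi> s *\<^sub>R normal L (gamma_ex x0 L) s + \<phi>\<tau> s *\<^sub>R dv {0..2*L} (gamma_ex x0 L) s"
    and acc: "\<forall>s\<in>{0..2*L}. accel {-tV..tV} V s
      = \<psi> s *\<^sub>R normal L (gamma_ex x0 L) s + \<psi>\<tau> s *\<^sub>R dv {0..2*L} (gamma_ex x0 L) s"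
  shows "dv {0..2*L} \<phi> 0 = 0" "dv {0..2*L} \<phi> (2*L) = 0" "dv {0..2*L} \<psi> 0 \<le> 0" "0 \<le> dv {0..2*L} \<psi> (2*L)"
    and "\<exists>f1. (\<forall>t\<in>{-tV..tV}. ((\<lambda>t. Fen L (\<lambda>s. V s t)) has_real_derivative f1 t) (at t within {-tV..tV}))
      \<and> (f1 has_real_derivative
           Qform x0 L \<phi> \<phi>\<tau> \<psi> + (dv {0..2*L} \<psi> (2*L) / (curv L (gamma_ex x0 L) (2*L))\<^sup>2
             - dv {0..2*L} \<psi> 0 / (curv L (gamma_ex x0 L) 0)\<^sup>2)) (at 0)"
    and "Qform x0 L \<phi> \<phi>\<tau> \<psi> \<le> Qform x0 L \<phi> \<phi>\<tau> \<psi>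
      + (dv {0..2*L} \<psi> (2*L) / (curv L (gamma_ex x0 L) (2*L))\<^sup>2 - dv {0..2*L} \<psi> 0 / (curv L (gamma_ex x0 L) 0)\<^sup>2)"
proof -
  have tV: "0 < tV" and var: "variation x0 L (gamma_ex x0 L) {-tV..tV} V"
    using V unfolding admissible_variation_def by auto
  obtain U g where "smooth_variation x0 L (-tV) tV U g V"
    using obtain_smooth_variation[OF var x0 xL] tV by auto
  then interpret decomposed_variation x0 L "-tV" tV U g V \<phi> \<phi>\<tau> \<psi> \<psi>\<tau>
    using vel acc unfolding decomposed_variation_def decomposed_variation_axioms_def by blast
  have tV': "- tV < 0" "0 < tV" using tV by auto
  note ends = endpoint_conditions[OF tV']
  show "dv {0..2*L} \<phi> 0 = 0" "dv {0..2*L} \<phi> (2*L) = 0" "dv {0..2*L} \<psi> 0 \<le> 0" "0 \<le> dv {0..2*L} \<psi> (2*L)"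
    by (fact ends)+
  have "at (0::real) within {-tV..tV} = at 0"
    by (rule at_within_interior) (use tV in simp)
  then have "((\<lambda>t. integral {0..2*L} (\<lambda>s. energy_t g s t)) has_real_derivative
      Qform x0 L \<phi> \<phi>\<tau> \<psi> + (dv {0..2*L} \<psi> (2*L) / (curv L (gamma_ex x0 L) (2*L))\<^sup>2
        - dv {0..2*L} \<psi> 0 / (curv L (gamma_ex x0 L) 0)\<^sup>2)) (at 0)"
    using second_variation unfolding ends(1,2) by simp
  then show "\<exists>f1. (\<forall>t\<in>{-tV..tV}. ((\<lambda>t. Fen L (\<lambda>s. V s t)) has_real_derivative f1 t) (at t within {-tV..tV}))
      \<and> (f1 has_real_derivative
           Qform x0 L \<phi> \<phi>\<tau> \<psi> + (dv {0..2*L} \<psi> (2*L) / (curv L (gamma_ex x0 L) (2*L))\<^sup>2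
             - dv {0..2*L} \<psi> 0 / (curv L (gamma_ex x0 L) 0)\<^sup>2)) (at 0)"
    by (intro exI[where x="\<lambda>t. integral {0..2*L} (\<lambda>s. energy_t g s t)"] conjI)
      (use has_field_derivative_Fen in blast)
  have "0 \<le> dv {0..2*L} \<psi> (2*L) / (curv L (gamma_ex x0 L) (2*L))\<^sup>2"
    and "dv {0..2*L} \<psi> 0 / (curv L (gamma_ex x0 L) 0)\<^sup>2 \<le> 0"
    using ends(3,4) by (simp_all add: divide_nonpos_nonneg)
  then show "Qform x0 L \<phi> \<phi>\<tau> \<psi> \<le> Qform x0 L \<phi> \<phi>\<tau> \<psi>
      + (dv {0..2*L} \<psi> (2*L) / (curv L (gamma_ex x0 L) (2*L))\<^sup>2 - dv {0..2*L} \<psi> 0 / (curv L (gamma_ex x0 L) 0)\<^sup>2)"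
    by simp
qed

theorem mainTheorem10:
  fixes x0 L :: real
  assumes "0 < 3 * x0" and "3 * x0 < L"
  defines "\<gamma> \<equiv> gamma_ex x0 L"
      and "I \<equiv> {0..2*L}"
      and "H \<equiv> curv L (gamma_ex x0 L)"
  shows
   "(\<forall>V tV \<phi> \<phi>\<tau> \<psi> \<psi>\<tau>.
       one_sided_admissible_variation x0 L \<gamma> tV V
       \<and> (\<forall>s\<in>I. velocity {0..tV} V s = \<phi> s *\<^sub>R normal L \<gamma> s + \<phi>\<tau> s *\<^sub>R dv I \<gamma> s)
       \<and> (\<forall>s\<in>I. accel {0..tV} V s = \<psi> s *\<^sub>R normal L \<gamma> s + \<psi>\<tau> s *\<^sub>R dv I \<gamma> s)
     \<longrightarrow> (\<exists>f1.
           (\<forall>t\<in>{0..tV}. ((\<lambda>t. Fen L (\<lambda>s. V s t)) has_real_derivative f1 t) (at t within {0..tV}))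
         \<and> (f1 has_real_derivative
              (Qform x0 L \<phi> \<phi>\<tau> \<psi>
               + ((dv I \<psi> (2*L) - 2 * dv I \<phi> (2*L) * dv I \<phi>\<tau> (2*L)) / (H (2*L))\<^sup>2
                  - (dv I \<psi> 0 - 2 * dv I \<phi> 0 * dv I \<phi>\<tau> 0) / (H 0)\<^sup>2)))
             (at 0 within {0..tV})))
  \<and> (\<forall>V tV \<phi> \<phi>\<tau> \<psi> \<psi>\<tau>.
       admissible_variation x0 L \<gamma> tV V
       \<and> (\<forall>s\<in>I. velocity {-tV..tV} V s = \<phi> s *\<^sub>R normal L \<gamma> s + \<phi>\<tau> s *\<^sub>R dv I \<gamma> s)
       \<and> (\<forall>s\<in>I. accel {-tV..tV} V s = \<psi> s *\<^sub>R normal L \<gamma> s + \<psi>\<tau> s *\<^sub>R dv I \<gamma> s)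
     \<longrightarrow> dv I \<phi> 0 = 0 \<and> dv I \<phi> (2*L) = 0 \<and> dv I \<psi> 0 \<le> 0 \<and> dv I \<psi> (2*L) \<ge> 0
       \<and> (\<exists>f1.
           (\<forall>t\<in>{-tV..tV}. ((\<lambda>t. Fen L (\<lambda>s. V s t)) has_real_derivative f1 t) (at t within {-tV..tV}))
         \<and> (f1 has_real_derivative
              (Qform x0 L \<phi> \<phi>\<tau> \<psi> + (dv I \<psi> (2*L) / (H (2*L))\<^sup>2 - dv I \<psi> 0 / (H 0)\<^sup>2))) (at 0))
       \<and> Qform x0 L \<phi> \<phi>\<tau> \<psi> + (dv I \<psi> (2*L) / (H (2*L))\<^sup>2 - dv I \<psi> 0 / (H 0)\<^sup>2) \<ge> Qform x0 L \<phi> \<phi>\<tau> \<psi>)"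
proof -
  have x0: "0 < x0" using assms(1) by simp
  show ?thesis
    unfolding \<gamma>_def I_def H_def
    by (intro conjI allI impI; elim conjE; (intro conjI)?)
      (rule one_sided_second_variation[OF x0 assms(2)] two_sided_second_variation[OF x0 assms(2)]; assumption)+
qed

end
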